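(* Let $\alpha>0$ and $p_0=\frac12\chi_{(-1,1)}$. Then $p_0$ satisfies $p_0\in L^1(\mathbb{R})\cap L^\infty(\mathbb{R})$, $p_0\ge0$, $\int_{\mathbb{R}}p_0=1$, $\int_{\mathbb{R}}|\sigma|p_0<+\infty$, $D(p_0)=0$, and $\int_0^1\frac{dx}{F_{p_0}(x)}<+\infty$. Consequently the problem $$\partial_t u=D(u(t))\,\partial^2_{\sigma\sigma}u,\qquad u(0,\sigma)=\tfrac12\chi_{(-1,1)}(\sigma)$$ has infinitely many solutions in $C^0([0,+\infty);L^2(\mathbb{R}))$.
   Context: $\chi_{(-1,1)}$ is the characteristic function of $(-1,1)$. For $f\in L^1(\mathbb{R})$, $D(f)=\alpha\int_{|\sigma|>1}f(\sigma)\,d\sigma$. For $\eta>0$, $\varphi_\eta(x)=\frac{1}{\sqrt{2\pi}\eta}e^{-x^2/(2\eta^2)}$. $F_{p_0}:[0,+\infty)\to[0,+\infty)$ is defined by $F_{p_0}(0)=D(p_0)$ and, for $x>0$, $F_{p_0}(x)=\alpha\int_{|\sigma|>1}\Big(\int_{\mathbb{R}}p_0(\sigma')\varphi_{\sqrt{2x}}(\sigma-\sigma')\,d\sigma'\Big)d\sigma$. The equation is understood in the sense of distributions. *)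

theory Defs
  imports "HOL-Analysis.Analysis"
begin

definition Dfun :: "real \<Rightarrow> (real \<Rightarrow> real) \<Rightarrow> real" where
  "Dfun \<alpha> f = \<alpha> * (LINT \<sigma>:{\<sigma>. 1 < \<bar>\<sigma>\<bar>}|lborel. f \<sigma>)"

definition gauss :: "real \<Rightarrow> real \<Rightarrow> real" where
  "gauss \<eta> x = exp (- x\<^sup>2 / (2 * \<eta>\<^sup>2)) / (sqrt (2 * pi) * \<eta>)"

definition Ffun :: "real \<Rightarrow> (real \<Rightarrow> real) \<Rightarrow> real \<Rightarrow> real" where
  "Ffun \<alpha> p0 x = (if x = 0 then Dfun \<alpha> p0
     else \<alpha> * (LINT \<sigma>:{\<sigma>. 1 < \<bar>\<sigma>\<bar>}|lborel.
                 (LINT \<sigma>'|lborel. p0 \<sigma>' * gauss (sqrt (2 * x)) (\<sigma> - \<sigma>'))))"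

text \<open>C-infinity functions of two real variables (t, sigma): all partial derivatives
  of all orders exist everywhere and are continuous (coinductive closure).\<close>
coinductive smooth2 :: "(real \<Rightarrow> real \<Rightarrow> real) \<Rightarrow> bool" where
  "\<lbrakk> continuous_on UNIV (\<lambda>z. f (fst z) (snd z));
     \<And>t s. ((\<lambda>\<tau>. f \<tau> s) has_real_derivative f1 t s) (at t);
     \<And>t s. ((\<lambda>\<rho>. f t \<rho>) has_real_derivative f2 t s) (at s);
     smooth2 f1; smooth2 f2 \<rbrakk> \<Longrightarrow> smooth2 f"

definition pd_t :: "(real \<Rightarrow> real \<Rightarrow> real) \<Rightarrow> real \<Rightarrow> real \<Rightarrow> real" where
  "pd_t f t s = deriv (\<lambda>\<tau>. f \<tau> s) t"

definition pd_s :: "(real \<Rightarrow> real \<Rightarrow> real) \<Rightarrow> real \<Rightarrow> real \<Rightarrow> real" where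
  "pd_s f t s = deriv (\<lambda>\<rho>. f t \<rho>) s"

definition test_fun :: "(real \<Rightarrow> real \<Rightarrow> real) \<Rightarrow> bool" where
  "test_fun \<phi> \<longleftrightarrow> smooth2 \<phi> \<and>
     (\<exists>a b R. 0 < a \<and> (\<forall>t s. \<phi> t s \<noteq> 0 \<longrightarrow> a \<le> t \<and> t \<le> b \<and> \<bar>s\<bar> \<le> R))"

definition C0_L2 :: "(real \<Rightarrow> real \<Rightarrow> real) \<Rightarrow> bool" where
  "C0_L2 u \<longleftrightarrow>
     (\<forall>t\<ge>0. u t \<in> borel_measurable lborel \<and> integrable lborel (\<lambda>s. (u t s)\<^sup>2)) \<and>
     (\<forall>t0\<ge>0. ((\<lambda>t. LINT s|lborel. (u t s - u t0 s)\<^sup>2) \<longlongrightarrow> 0) (at t0 within {0..}))"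

text \<open>Distributional solution of  u_t = D(u(t)) u_{ss},  u(0) = p0,
  in C^0([0,+infinity); L^2(R)).  D(u(t)) requires u(t) in L^1.\<close>
definition is_solution :: "real \<Rightarrow> (real \<Rightarrow> real) \<Rightarrow> (real \<Rightarrow> real \<Rightarrow> real) \<Rightarrow> bool" where
  "is_solution \<alpha> p0 u \<longleftrightarrow>
     C0_L2 u \<and>
     (\<forall>t\<ge>0. integrable lborel (u t)) \<and>
     (AE s in lborel. u 0 s = p0 s) \<and>
     (\<forall>\<phi>. test_fun \<phi> \<longrightarrow>
        (let g = (\<lambda>(t, s). u t s * (pd_t \<phi> t s + Dfun \<alpha> (u t) * pd_s (pd_s \<phi>) t s))
         in integrable (lborel \<Otimes>\<^sub>M lborel) g \<and> integral\<^sup>L (lborel \<Otimes>\<^sub>M lborel) g = 0))"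

end

theory Submission
  imports Defs "HOL-Probability.Distributions"
begin

text \<open>
  Let \<open>V c\<close> (\<open>heat_unif c\<close> below) be \<open>p\<^sub>0\<close> smoothed by a centred Gaussian of standard
  deviation \<open>c\<close>, i.e. the heat flow from \<open>p\<^sub>0\<close> at time \<open>c\<^sup>2/2\<close>, so that
  \<open>F\<^sub>p\<^sub>0(x) = D(V (\<surd>(2x)))\<close>. As \<open>p\<^sub>0\<close> vanishes outside \<open>[-1,1]\<close>, \<open>D(p\<^sub>0) = 0\<close>, while
  \<open>D(V c) \<ge> const \<cdot> c\<close> for small \<open>c\<close>. Hence \<open>1/F\<^sub>p\<^sub>0(x) = O(x\<^sup>-\<^sup>1\<^sup>/\<^sup>2)\<close> is integrable at \<open>0\<close>,
  and the Osgood-type equation \<open>\<tau>' = F\<^sub>p\<^sub>0(\<tau>)\<close> has a solution that vanishes on \<open>(-\<infinity>,0]\<close>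
  and is positive afterwards: the inverse of \<open>x \<mapsto> \<integral>\<^sub>0\<^sup>x 1/F\<^sub>p\<^sub>0\<close>.
  For a delay \<open>T \<ge> 0\<close>, \<open>u\<^sub>T(t) = V (\<surd>(2 \<tau>(t - T)))\<close> rests at \<open>p\<^sub>0\<close> until time \<open>T\<close> and then
  follows the heat flow with the time change \<open>\<tau>\<close>; since \<open>\<partial>\<^sub>c V = c \<partial>\<^sub>\<sigma>\<^sub>\<sigma> V\<close>, it solves
  \<open>\<partial>\<^sub>t u = \<tau>'(t - T) \<partial>\<^sub>\<sigma>\<^sub>\<sigma> u = D(u) \<partial>\<^sub>\<sigma>\<^sub>\<sigma> u\<close>. Two delays give different solutions,
  because at the larger delay \<open>D\<close> vanishes on one of them but not on the other.
\<close>

section \<open>The initial datum\<close>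

definition unif_density :: "real \<Rightarrow> real" where
  "unif_density \<sigma> = indicator {-1<..<1} \<sigma> / 2"

lemma unif_density_measurable[measurable]: "unif_density \<in> borel_measurable borel"
  unfolding unif_density_def[abs_def] by measurable

lemma unif_density_nonneg: "0 \<le> unif_density x"
  and unif_density_le: "unif_density x \<le> 1/2"
  by (auto simp: unif_density_def indicator_def)

lemma integrable_unif_density: "integrable lborel unif_density"
proof -
  have "integrable lborel (\<lambda>x. indicator {-1<..<1::real} x / (2::real))"
    by (intro integrable_divide) auto
  then show ?thesis by (simp add: unif_density_def[abs_def])
qed

lemma integral_unif_density: "(LINT x|lborel. unif_density x) = 1"
  by (simp add: unif_density_def[abs_def])

lemma nn_integral_unif_density_shift: "(\<integral>\<^sup>+s. ennreal (unif_density (s - a)) \<partial>lborel) = 1"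
proof -
  have "(\<integral>\<^sup>+s. ennreal (unif_density s) \<partial>lborel) = 1"
    using nn_integral_eq_integral[OF integrable_unif_density] unif_density_nonneg
      integral_unif_density by simp
  then show ?thesis
    using nn_integral_real_affine[of "\<lambda>x. ennreal (unif_density x)" 1 "-a"] by simp
qed

lemma integrable_abs_moment_unif_density: "integrable lborel (\<lambda>\<sigma>. \<bar>\<sigma>\<bar> * unif_density \<sigma>)"
proof (rule Bochner_Integration.integrable_bound)
  show "integrable lborel (indicator {-1..1::real} :: real \<Rightarrow> real)"
    by (simp add: integrable_indicator_iff)
  show "AE x in lborel. norm (\<bar>x\<bar> * unif_density x) \<le> norm (indicator {-1..1::real} x :: real)"
    by (intro AE_I2) (auto simp: unif_density_def indicator_def)
qed simp

lemma Dfun_eq_integral_indicator: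
  "Dfun \<alpha> f = \<alpha> * (LINT \<sigma>|lborel. indicator {\<sigma>. 1 < \<bar>\<sigma>\<bar>} \<sigma> * f \<sigma>)"
  by (simp add: Dfun_def set_lebesgue_integral_def)

lemma Dfun_unif_density: "Dfun \<alpha> unif_density = 0"
proof -
  have "(\<lambda>\<sigma>. indicator {\<sigma>. 1 < \<bar>\<sigma>\<bar>} \<sigma> * unif_density \<sigma>) = (\<lambda>_. 0)"
    by (rule ext) (auto simp: unif_density_def indicator_def)
  then show ?thesis by (simp add: Dfun_eq_integral_indicator)
qed

section \<open>Gaussian smoothing of the initial datum\<close>

definition heat_unif :: "real \<Rightarrow> real \<Rightarrow> real" where
  "heat_unif c s = (LINT z|lborel. unif_density (s - c * z) * std_normal_density z)"

lemma heat_unif_integrand_le: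
  "unif_density (s - c * z) * std_normal_density z \<le> std_normal_density z / 2"
  using mult_right_mono[OF unif_density_le normal_density_nonneg] by simp

lemma integrable_heat_unif_integrand:
  "integrable lborel (\<lambda>z. unif_density (s - c * z) * std_normal_density z)"
  by (rule Bochner_Integration.integrable_bound[where f="\<lambda>z. std_normal_density z / 2"])
     (use heat_unif_integrand_le in \<open>auto intro!: integrable_divide AE_I2
        simp: abs_mult unif_density_nonneg\<close>)

lemma heat_unif_0: "heat_unif 0 = unif_density"
  by (simp add: heat_unif_def[abs_def])

lemma heat_unif_nonneg: "0 \<le> heat_unif c s"
  unfolding heat_unif_def
  by (intro integral_nonneg_AE AE_I2 mult_nonneg_nonneg unif_density_nonneg) auto

lemma heat_unif_le: "heat_unif c s \<le> 1/2"
proof -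
  have "heat_unif c s \<le> (LINT z|lborel. std_normal_density z / 2)"
    unfolding heat_unif_def
    by (intro integral_mono integrable_heat_unif_integrand integrable_divide integrable_normal_density)
       (use heat_unif_integrand_le in auto)
  then show ?thesis by simp
qed

lemma abs_heat_unif_le_1: "\<bar>heat_unif c s\<bar> \<le> 1"
  using heat_unif_nonneg[of c s] heat_unif_le[of c s] by simp

lemma measurable_compose_uncurry:
  fixes h :: "real \<Rightarrow> real \<Rightarrow> real"
  assumes "(\<lambda>z. h (fst z) (snd z)) \<in> borel_measurable borel"
    and "f \<in> M \<rightarrow>\<^sub>M borel" and "g \<in> M \<rightarrow>\<^sub>M borel"
  shows "(\<lambda>x. h (f x) (g x)) \<in> borel_measurable M"
proof -
  have "(\<lambda>z. h (fst z) (snd z)) \<in> borel_measurable (borel \<Otimes>\<^sub>M borel)"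
    using assms(1) by (simp add: borel_prod)
  from measurable_compose[OF measurable_Pair[OF assms(2,3)] this] show ?thesis
    by simp
qed

lemma heat_unif_measurable[measurable (raw)]:
  assumes "f \<in> M \<rightarrow>\<^sub>M borel" and "g \<in> M \<rightarrow>\<^sub>M borel"
  shows "(\<lambda>x. heat_unif (f x) (g x)) \<in> borel_measurable M"
proof -
  have "(\<lambda>x. LINT z|lborel. unif_density (snd x - fst x * z) * std_normal_density z)
      \<in> borel_measurable (borel \<Otimes>\<^sub>M borel)"
    by measurable
  then have "(\<lambda>x. heat_unif (fst x) (snd x)) \<in> borel_measurable borel"
    by (simp add: heat_unif_def borel_prod)
  then show ?thesis
    using assms by (rule measurable_compose_uncurry)
qed

lemma nn_integral_std_normal_density: "(\<integral>\<^sup>+z. ennreal (std_normal_density z) \<partial>lborel) = 1"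
  using nn_integral_eq_integral[OF integrable_normal_density[of 1 0] AE_I2[OF normal_density_nonneg]]
  by simp

lemma nn_integral_heat_unif: "(\<integral>\<^sup>+s. ennreal (heat_unif c s) \<partial>lborel) = 1"
proof -
  let ?k = "\<lambda>z s. ennreal (unif_density (s - c * z) * std_normal_density z)"
  have "(\<integral>\<^sup>+s. ennreal (heat_unif c s) \<partial>lborel) = (\<integral>\<^sup>+s. (\<integral>\<^sup>+z. ?k z s \<partial>lborel) \<partial>lborel)"
    unfolding heat_unif_def
    by (intro nn_integral_cong nn_integral_eq_integral[symmetric] integrable_heat_unif_integrand
          AE_I2 mult_nonneg_nonneg unif_density_nonneg) auto
  also have "\<dots> = (\<integral>\<^sup>+z. (\<integral>\<^sup>+s. ?k z s \<partial>lborel) \<partial>lborel)"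
    by (rule lborel_pair.Fubini'[where f="?k"]) measurable
  also have "\<dots> = (\<integral>\<^sup>+z. ennreal (std_normal_density z) \<partial>lborel)"
  proof (intro nn_integral_cong)
    fix z
    have "(\<integral>\<^sup>+s. ?k z s \<partial>lborel)
        = (\<integral>\<^sup>+s. ennreal (unif_density (s - c * z)) * ennreal (std_normal_density z) \<partial>lborel)"
      by (intro nn_integral_cong) (simp add: ennreal_mult unif_density_nonneg)
    also have "\<dots> = (\<integral>\<^sup>+s. ennreal (unif_density (s - c * z)) \<partial>lborel) * ennreal (std_normal_density z)"
      by (rule nn_integral_multc) measurable
    finally show "(\<integral>\<^sup>+s. ?k z s \<partial>lborel) = ennreal (std_normal_density z)"
      using nn_integral_unif_density_shift[of "c * z"] by simp
  qed
  finally show ?thesis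
    using nn_integral_std_normal_density by simp
qed

lemma integrable_heat_unif: "integrable lborel (heat_unif c)"
  and integral_heat_unif: "(LINT s|lborel. heat_unif c s) = 1"
  using nn_integral_eq_integrable[of "heat_unif c" lborel 1] nn_integral_heat_unif heat_unif_nonneg
  by auto

lemma heat_unif_eq_gauss_convolution:
  assumes c: "0 < c"
  shows "(LINT \<sigma>'|lborel. unif_density \<sigma>' * gauss c (\<sigma> - \<sigma>')) = heat_unif c \<sigma>"
proof -
  have gauss_scaled: "gauss c (c * z) = std_normal_density z / c" for z
    using c by (simp add: gauss_def std_normal_density_def power_mult_distrib)
  have "(LINT \<sigma>'|lborel. unif_density \<sigma>' * gauss c (\<sigma> - \<sigma>')) =
      \<bar>-c\<bar> *\<^sub>R (LINT z|lborel. unif_density (\<sigma> + -c * z) * gauss c (\<sigma> - (\<sigma> + -c * z)))"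
    by (rule lborel_integral_real_affine) (use c in simp)
  also have "\<dots> = c * (LINT z|lborel. (unif_density (\<sigma> - c * z) * std_normal_density z) / c)"
    using c by (simp add: gauss_scaled)
  also have "\<dots> = heat_unif c \<sigma>"
    using c by (simp add: heat_unif_def)
  finally show ?thesis .
qed

lemma Ffun_unif_density:
  assumes "0 \<le> x"
  shows "Ffun \<alpha> unif_density x = Dfun \<alpha> (heat_unif (sqrt (2 * x)))"
proof (cases "x = 0")
  case True
  then show ?thesis by (simp add: Ffun_def heat_unif_0)
next
  case False
  with assms have "0 < sqrt (2 * x)" by simp
  then show ?thesis using False
    by (simp add: Ffun_def Dfun_def heat_unif_eq_gauss_convolution)
qed

lemma nn_integral_unif_density_shift_diff:
  "(\<integral>\<^sup>+s. ennreal \<bar>unif_density (s - a) - unif_density (s - b)\<bar> \<partial>lborel) \<le> ennreal (2 * \<bar>a - b\<bar>)"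
proof -
  define h where "h = b - a"
  let ?B = "\<lambda>x. (indicator {-1-\<bar>h\<bar>..-1+\<bar>h\<bar>} x + indicator {1-\<bar>h\<bar>..1+\<bar>h\<bar>} x) / (2::real)"
  have shift_bound: "\<bar>unif_density (x + h) - unif_density x\<bar> \<le> ?B x" for x
    by (auto simp: unif_density_def indicator_def abs_if split: if_splits)
  have "(\<integral>\<^sup>+s. ennreal \<bar>unif_density (s - a) - unif_density (s - b)\<bar> \<partial>lborel)
      = (\<integral>\<^sup>+x. ennreal \<bar>unif_density (b + 1 * x - a) - unif_density (b + 1 * x - b)\<bar> \<partial>lborel)"
    using nn_integral_real_affine[of "\<lambda>s. ennreal \<bar>unif_density (s - a) - unif_density (s - b)\<bar>" 1 b]
    by simp
  also have "\<dots> = (\<integral>\<^sup>+x. ennreal \<bar>unif_density (x + h) - unif_density x\<bar> \<partial>lborel)"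
    by (intro nn_integral_cong) (simp add: h_def algebra_simps)
  also have "\<dots> \<le> (\<integral>\<^sup>+x. ennreal (?B x) \<partial>lborel)"
    by (intro nn_integral_mono ennreal_leI shift_bound)
  also have "\<dots> = ennreal (LINT x|lborel. ?B x)"
    by (intro nn_integral_eq_integral integrable_divide integrable_add AE_I2) auto
  also have "(LINT x|lborel. ?B x) = 2 * \<bar>h\<bar>"
    by (simp add: integral_add)
  finally show ?thesis by (simp add: h_def abs_minus_commute)
qed

lemma abs_heat_unif_diff_le:
  "ennreal \<bar>heat_unif c1 s - heat_unif c2 s\<bar>
    \<le> (\<integral>\<^sup>+z. ennreal (\<bar>unif_density (s - c1 * z) - unif_density (s - c2 * z)\<bar> * std_normal_density z) \<partial>lborel)"
proof -
  let ?d = "\<lambda>z. (unif_density (s - c1 * z) - unif_density (s - c2 * z)) * std_normal_density z"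
  have int: "integrable lborel ?d"
    using integrable_heat_unif_integrand[of s c1] integrable_heat_unif_integrand[of s c2]
    by (simp add: left_diff_distrib)
  have "heat_unif c1 s - heat_unif c2 s = (LINT z|lborel. ?d z)"
    unfolding heat_unif_def left_diff_distrib
    by (rule Bochner_Integration.integral_diff[symmetric]) (rule integrable_heat_unif_integrand)+
  also have "\<bar>\<dots>\<bar> \<le> (LINT z|lborel. \<bar>?d z\<bar>)"
    by (rule integral_abs_bound)
  finally have "ennreal \<bar>heat_unif c1 s - heat_unif c2 s\<bar> \<le> ennreal (LINT z|lborel. \<bar>?d z\<bar>)"
    by (rule ennreal_leI)
  also have "\<dots> = (\<integral>\<^sup>+z. ennreal \<bar>?d z\<bar> \<partial>lborel)"
    using integrable_abs[OF int] by (intro nn_integral_eq_integral[symmetric]) auto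
  finally show ?thesis by (simp add: abs_mult)
qed

text \<open>
  Shifting the window of \<open>p\<^sub>0\<close> by \<open>(c\<^sub>1 - c\<^sub>2) z\<close> costs \<open>2 |c\<^sub>1 - c\<^sub>2| |z|\<close> in \<open>L\<^sup>1\<close>, and
  \<open>sqrt (2/pi)\<close> is \<open>E|Z|\<close> for a standard normal \<open>Z\<close>.
\<close>

lemma nn_integral_heat_unif_diff:
  "(\<integral>\<^sup>+s. ennreal \<bar>heat_unif c1 s - heat_unif c2 s\<bar> \<partial>lborel) \<le> ennreal (2 * \<bar>c1 - c2\<bar> * sqrt (2/pi))"
proof -
  let ?k = "\<lambda>z s. ennreal (\<bar>unif_density (s - c1 * z) - unif_density (s - c2 * z)\<bar> * std_normal_density z)"
  let ?m = "\<lambda>z. 2 * \<bar>c1 - c2\<bar> * (std_normal_density z * \<bar>z\<bar> ^ (2 * 0 + 1))"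
  have "(\<integral>\<^sup>+s. ennreal \<bar>heat_unif c1 s - heat_unif c2 s\<bar> \<partial>lborel)
     \<le> (\<integral>\<^sup>+s. (\<integral>\<^sup>+z. ?k z s \<partial>lborel) \<partial>lborel)"
    by (intro nn_integral_mono abs_heat_unif_diff_le)
  also have "\<dots> = (\<integral>\<^sup>+z. (\<integral>\<^sup>+s. ?k z s \<partial>lborel) \<partial>lborel)"
    by (rule lborel_pair.Fubini'[where f="?k"]) measurable
  also have "\<dots> \<le> (\<integral>\<^sup>+z. ennreal (?m z) \<partial>lborel)"
  proof (intro nn_integral_mono)
    fix z
    have "(\<integral>\<^sup>+s. ?k z s \<partial>lborel)
        = (\<integral>\<^sup>+s. ennreal \<bar>unif_density (s - c1 * z) - unif_density (s - c2 * z)\<bar> \<partial>lborel)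
            * ennreal (std_normal_density z)"
      by (subst nn_integral_multc[symmetric]) (auto intro!: nn_integral_cong simp: ennreal_mult)
    also have "\<dots> \<le> ennreal (2 * \<bar>c1 * z - c2 * z\<bar>) * ennreal (std_normal_density z)"
      by (intro mult_right_mono nn_integral_unif_density_shift_diff) auto
    also have "\<dots> = ennreal (?m z)"
      by (simp add: ennreal_mult[symmetric] abs_mult left_diff_distrib[symmetric] mult_ac)
    finally show "(\<integral>\<^sup>+s. ?k z s \<partial>lborel) \<le> ennreal (?m z)" .
  qed
  also have "\<dots> = ennreal (LINT z|lborel. ?m z)"
    by (intro nn_integral_eq_integral integrable_mult_right AE_I2)
       (use integrable_std_normal_moment_abs[of 1] in auto)
  also have "(LINT z|lborel. ?m z) = 2 * \<bar>c1 - c2\<bar> * sqrt (2/pi)"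
    using integral_std_normal_moment_abs_odd[of 0] by simp
  finally show ?thesis .
qed

lemma integrable_abs_heat_unif_diff: "integrable lborel (\<lambda>s. \<bar>heat_unif c1 s - heat_unif c2 s\<bar>)"
  by (intro integrable_abs Bochner_Integration.integrable_diff integrable_heat_unif)

lemma integral_abs_heat_unif_diff_le:
  "(LINT s|lborel. \<bar>heat_unif c1 s - heat_unif c2 s\<bar>) \<le> 2 * \<bar>c1 - c2\<bar> * sqrt (2/pi)"
proof -
  have "ennreal (LINT s|lborel. \<bar>heat_unif c1 s - heat_unif c2 s\<bar>)
      = (\<integral>\<^sup>+s. ennreal \<bar>heat_unif c1 s - heat_unif c2 s\<bar> \<partial>lborel)"
    by (intro nn_integral_eq_integral[symmetric] integrable_abs_heat_unif_diff) auto
  also note nn_integral_heat_unif_diff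
  finally show ?thesis
    by (subst (asm) ennreal_le_iff) auto
qed

lemma integrable_heat_unif_squared: "integrable lborel (\<lambda>s. (heat_unif c s)\<^sup>2)"
proof (rule Bochner_Integration.integrable_bound[OF integrable_heat_unif])
  have "heat_unif c s * heat_unif c s \<le> heat_unif c s" for s
    using heat_unif_nonneg[of c s] heat_unif_le[of c s] by (intro mult_left_le) auto
  then show "AE s in lborel. norm ((heat_unif c s)\<^sup>2) \<le> norm (heat_unif c s)"
    by (intro AE_I2) (simp add: power2_eq_square heat_unif_nonneg)
qed simp

lemma integrable_heat_unif_diff_squared:
  "integrable lborel (\<lambda>s. (heat_unif c1 s - heat_unif c2 s)\<^sup>2)"
  and integral_heat_unif_diff_squared_le:
  "(LINT s|lborel. (heat_unif c1 s - heat_unif c2 s)\<^sup>2) \<le> 2 * \<bar>c1 - c2\<bar> * sqrt (2/pi)"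
proof -
  have sq_le: "(heat_unif c1 s - heat_unif c2 s)\<^sup>2 \<le> \<bar>heat_unif c1 s - heat_unif c2 s\<bar>" for s
  proof -
    have "\<bar>heat_unif c1 s - heat_unif c2 s\<bar> \<le> 1"
      using heat_unif_nonneg[of c1 s] heat_unif_le[of c1 s] heat_unif_nonneg[of c2 s]
        heat_unif_le[of c2 s] by linarith
    then show ?thesis
      by (metis abs_ge_zero abs_mult_self_eq mult_left_le power2_eq_square)
  qed
  show int: "integrable lborel (\<lambda>s. (heat_unif c1 s - heat_unif c2 s)\<^sup>2)"
    by (rule Bochner_Integration.integrable_bound[OF integrable_abs_heat_unif_diff])
       (auto intro!: AE_I2 order_trans[OF _ sq_le])
  have "(LINT s|lborel. (heat_unif c1 s - heat_unif c2 s)\<^sup>2)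
      \<le> (LINT s|lborel. \<bar>heat_unif c1 s - heat_unif c2 s\<bar>)"
    by (intro integral_mono int integrable_abs_heat_unif_diff sq_le)
  also have "\<dots> \<le> 2 * \<bar>c1 - c2\<bar> * sqrt (2/pi)"
    by (rule integral_abs_heat_unif_diff_le)
  finally show "(LINT s|lborel. (heat_unif c1 s - heat_unif c2 s)\<^sup>2) \<le> 2 * \<bar>c1 - c2\<bar> * sqrt (2/pi)" .
qed

lemma lborel_integral_eq_integral_Icc:
  fixes h :: "real \<Rightarrow> real"
  assumes h_meas: "h \<in> borel_measurable borel" and h_bound: "\<And>x. \<bar>h x\<bar> \<le> M"
    and h_zero: "\<And>x. x \<notin> {p..q} \<Longrightarrow> h x = 0"
  shows "integrable lborel h" and "(LINT x|lborel. h x) = integral {p..q} h"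
proof -
  have restrict: "(\<lambda>x. indicator {p..q} x *\<^sub>R h x) = h"
    using h_zero by (intro ext) (auto simp: indicator_def)
  have "integrable lborel (\<lambda>x. M * indicator {p..q} x)"
    by (intro integrable_mult_right) (cases "p \<le> q"; simp add: integrable_indicator_iff)
  then show int: "integrable lborel h"
    by (rule Bochner_Integration.integrable_bound)
       (use h_meas h_bound h_zero in \<open>auto simp: indicator_def intro!: AE_I2 order_trans[OF h_bound]\<close>)
  have "set_integrable lborel {p..q} h"
    unfolding set_integrable_def restrict by (rule int)
  then have "(LINT x:{p..q}|lborel. h x) = integral {p..q} h"
    by (rule set_borel_integral_eq_integral(2))
  moreover have "(LINT x|lborel. h x) = (LINT x:{p..q}|lborel. h x)"
    unfolding set_lebesgue_integral_def restrict ..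
  ultimately show "(LINT x|lborel. h x) = integral {p..q} h"
    by simp
qed

lemma has_real_derivative_if_integral_increments:
  fixes P g :: "real \<Rightarrow> real"
  assumes g: "continuous_on UNIV g" and P: "\<And>p q. p \<le> q \<Longrightarrow> P q - P p = integral {p..q} g"
  shows "(P has_real_derivative g x) (at x)"
proof -
  have "((\<lambda>u. integral {x-1..u} g) has_real_derivative g x) (at x within {x-1..x+1})"
    by (rule integral_has_real_derivative[OF continuous_on_subset[OF g]]) auto
  moreover have "x \<in> interior {x-1..x+1}"
    by (simp add: interior_atLeastAtMost_real)
  ultimately have "((\<lambda>u. integral {x-1..u} g) has_real_derivative g x) (at x)"
    by (simp only: at_within_interior)
  from DERIV_add[OF DERIV_const this]
  have "((\<lambda>u. P (x-1) + integral {x-1..u} g) has_real_derivative g x) (at x)"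
    by (simp only: add_0_left)
  then show ?thesis
  proof (rule has_field_derivative_transform_within_open)
    fix u assume "u \<in> {x-1<..<x+1}"
    then show "P (x-1) + integral {x-1..u} g = P u"
      using P[of "x-1" u] by simp
  qed auto
qed

definition std_normal_cdf :: "real \<Rightarrow> real" where
  "std_normal_cdf x = (LINT z|lborel. std_normal_density z * indicator {..x} z)"

lemma continuous_on_std_normal_density: "continuous_on S std_normal_density"
  unfolding std_normal_density_def[abs_def] by (intro continuous_intros) auto

lemma integral_std_normal_density_Ioo:
  "(LINT z|lborel. std_normal_density z * indicator {p<..<q} z) = integral {p..q} std_normal_density"
proof -
  have "set_integrable lborel {p<..<q} std_normal_density"
    unfolding set_integrable_def
    using integrable_real_mult_indicator[of "{p<..<q}" lborel std_normal_density]
    by (simp add: mult.commute)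
  then have "(LINT z:{p<..<q}|lborel. std_normal_density z) = integral {p<..<q} std_normal_density"
    by (rule set_borel_integral_eq_integral(2))
  then show ?thesis
    by (simp add: set_lebesgue_integral_def mult.commute integral_open_interval_real)
qed

lemma std_normal_cdf_diff:
  assumes "p \<le> q"
  shows "std_normal_cdf q - std_normal_cdf p = integral {p..q} std_normal_density"
proof -
  have ae: "AE z in lborel. std_normal_density z * indicator {..q} z - std_normal_density z * indicator {..p} z
      = std_normal_density z * indicator {p<..<q} z"
    using AE_lborel_singleton[of q] by eventually_elim (use assms in \<open>auto simp: indicator_def\<close>)
  have "std_normal_cdf q - std_normal_cdf p
      = (LINT z|lborel. std_normal_density z * indicator {..q} z - std_normal_density z * indicator {..p} z)"
    unfolding std_normal_cdf_def
    by (rule Bochner_Integration.integral_diff[symmetric])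
       (auto intro: integrable_real_mult_indicator)
  also have "\<dots> = (LINT z|lborel. std_normal_density z * indicator {p<..<q} z)"
    by (rule integral_cong_AE[OF _ _ ae]) auto
  finally show ?thesis
    by (simp only: integral_std_normal_density_Ioo)
qed

lemma std_normal_cdf_deriv: "(std_normal_cdf has_real_derivative std_normal_density x) (at x)"
  by (rule has_real_derivative_if_integral_increments[OF continuous_on_std_normal_density std_normal_cdf_diff])

lemma std_normal_cdf_deriv_chain[derivative_intros]:
  "(f has_real_derivative f') (at x within S) \<Longrightarrow>
   ((\<lambda>x. std_normal_cdf (f x)) has_real_derivative std_normal_density (f x) * f') (at x within S)"
  by (rule DERIV_chain2[OF std_normal_cdf_deriv])

lemma continuous_on_std_normal_cdf[continuous_intros]:
  "continuous_on S f \<Longrightarrow> continuous_on S (\<lambda>x. std_normal_cdf (f x))"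
  by (rule continuous_on_compose2[of UNIV, OF continuous_at_imp_continuous_on])
     (auto intro: DERIV_isCont[OF std_normal_cdf_deriv])

lemma std_normal_density_deriv_chain[derivative_intros]:
  "(f has_real_derivative f') (at x within S) \<Longrightarrow>
   ((\<lambda>x. std_normal_density (f x)) has_real_derivative (- f x * std_normal_density (f x)) * f') (at x within S)"
proof (rule DERIV_chain2[of std_normal_density])
  show "(std_normal_density has_real_derivative - f x * std_normal_density (f x)) (at (f x))"
    unfolding std_normal_density_def[abs_def]
    by (auto intro!: derivative_eq_intros simp: power2_eq_square field_simps real_sqrt_mult_self)
qed

lemma continuous_on_std_normal_density_compose[continuous_intros]:
  "continuous_on S f \<Longrightarrow> continuous_on S (\<lambda>x. std_normal_density (f x))"
  by (rule continuous_on_compose2[OF continuous_on_std_normal_density]) auto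

text \<open>
  The closed form \<open>heat_cf\<close> agrees with \<open>heat_unif c\<close> only for \<open>c > 0\<close>: at \<open>c = 0\<close> it
  is identically \<open>0\<close>, because \<open>x / 0 = 0\<close>.
\<close>

definition heat_cf :: "real \<Rightarrow> real \<Rightarrow> real" where
  "heat_cf c s = (std_normal_cdf ((s + 1) / c) - std_normal_cdf ((s - 1) / c)) / 2"

definition heat_cf_ds :: "real \<Rightarrow> real \<Rightarrow> real" where
  "heat_cf_ds c s = (std_normal_density ((s + 1) / c) - std_normal_density ((s - 1) / c)) / (2 * c)"

definition heat_cf_dss :: "real \<Rightarrow> real \<Rightarrow> real" where
  "heat_cf_dss c s = ((s - 1) / c * std_normal_density ((s - 1) / c)
                      - (s + 1) / c * std_normal_density ((s + 1) / c)) / (2 * c\<^sup>2)"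

lemma heat_unif_eq_heat_cf:
  assumes c: "0 < c"
  shows "heat_unif c s = heat_cf c s"
proof -
  have window: "unif_density (s - c * z) * std_normal_density z
      = std_normal_density z * indicator {(s - 1) / c<..<(s + 1) / c} z / 2" for z
  proof -
    have "(-1 < s - c * z \<and> s - c * z < 1) \<longleftrightarrow> ((s - 1) / c < z \<and> z < (s + 1) / c)"
      using c by (auto simp: field_simps)
    then show ?thesis
      by (auto simp: unif_density_def indicator_def)
  qed
  have "heat_unif c s = (LINT z|lborel. std_normal_density z * indicator {(s - 1) / c<..<(s + 1) / c} z) / 2"
    by (simp add: heat_unif_def window)
  also have "\<dots> = heat_cf c s"
    using c by (simp add: integral_std_normal_density_Ioo std_normal_cdf_diff heat_cf_def
        divide_right_mono)
  finally show ?thesis .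
qed

lemma heat_cf_deriv_s: "0 < c \<Longrightarrow> (heat_cf c has_real_derivative heat_cf_ds c s) (at s)"
  unfolding heat_cf_def[abs_def] heat_cf_ds_def
  by (auto intro!: derivative_eq_intros simp: field_simps)

lemma heat_cf_ds_deriv_s: "0 < c \<Longrightarrow> (heat_cf_ds c has_real_derivative heat_cf_dss c s) (at s)"
  unfolding heat_cf_ds_def[abs_def] heat_cf_dss_def
  by (auto intro!: derivative_eq_intros simp: field_simps power2_eq_square)

text \<open>The heat equation in the width variable: \<open>\<partial>\<^sub>c V = c \<partial>\<^sub>\<sigma>\<^sub>\<sigma> V\<close>.\<close>

lemma heat_cf_deriv_width:
  assumes c: "0 < c t" and dc: "(c has_real_derivative c1) (at t within X)"
  shows "((\<lambda>u. heat_cf (c u) s) has_real_derivative c t * heat_cf_dss (c t) s * c1) (at t within X)"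
  unfolding heat_cf_def heat_cf_dss_def
  using c by (auto intro!: derivative_eq_intros dc simp: field_simps power2_eq_square)

lemma continuous_on_heat_cf[continuous_intros]:
  "continuous_on S f \<Longrightarrow> continuous_on S g \<Longrightarrow> (\<And>x. x \<in> S \<Longrightarrow> f x \<noteq> 0) \<Longrightarrow>
   continuous_on S (\<lambda>x. heat_cf (f x) (g x))"
  unfolding heat_cf_def by (intro continuous_intros) auto

lemma continuous_on_heat_cf_dss[continuous_intros]:
  "continuous_on S f \<Longrightarrow> continuous_on S g \<Longrightarrow> (\<And>x. x \<in> S \<Longrightarrow> f x \<noteq> 0) \<Longrightarrow>
   continuous_on S (\<lambda>x. heat_cf_dss (f x) (g x))"
  unfolding heat_cf_dss_def by (intro continuous_intros) auto

section \<open>The functional \<open>D\<close> along the smoothing\<close>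

lemma integrable_indicator_beyond_unit_mult:
  fixes f :: "real \<Rightarrow> real"
  shows "integrable lborel f \<Longrightarrow> integrable lborel (\<lambda>\<sigma>. indicator {\<sigma>::real. 1 < \<bar>\<sigma>\<bar>} \<sigma> * f \<sigma>)"
  using integrable_real_mult_indicator[of "{\<sigma>::real. 1 < \<bar>\<sigma>\<bar>}" lborel f]
  by (simp add: mult.commute)

lemma Dfun_heat_unif_nonneg: "0 \<le> \<alpha> \<Longrightarrow> 0 \<le> Dfun \<alpha> (heat_unif c)"
  unfolding Dfun_eq_integral_indicator
  by (intro mult_nonneg_nonneg integral_nonneg_AE AE_I2) (auto simp: heat_unif_nonneg)

lemma Dfun_heat_unif_le:
  assumes "0 \<le> \<alpha>"
  shows "Dfun \<alpha> (heat_unif c) \<le> \<alpha>"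
proof -
  have "(LINT \<sigma>|lborel. indicator {\<sigma>. 1 < \<bar>\<sigma>\<bar>} \<sigma> * heat_unif c \<sigma>) \<le> (LINT \<sigma>|lborel. heat_unif c \<sigma>)"
    by (intro integral_mono integrable_indicator_beyond_unit_mult integrable_heat_unif)
       (auto simp: indicator_def heat_unif_nonneg)
  then show ?thesis
    using assms integral_heat_unif[of c] unfolding Dfun_eq_integral_indicator
    by (simp add: mult_left_le)
qed

lemma Dfun_heat_unif_lipschitz:
  "\<bar>Dfun \<alpha> (heat_unif c1) - Dfun \<alpha> (heat_unif c2)\<bar> \<le> \<bar>\<alpha>\<bar> * (2 * sqrt (2/pi)) * \<bar>c1 - c2\<bar>"
proof -
  let ?I = "\<lambda>c \<sigma>. indicator {\<sigma>::real. 1 < \<bar>\<sigma>\<bar>} \<sigma> * heat_unif c \<sigma>"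
  have "\<bar>(LINT \<sigma>|lborel. ?I c1 \<sigma>) - (LINT \<sigma>|lborel. ?I c2 \<sigma>)\<bar> = \<bar>LINT \<sigma>|lborel. ?I c1 \<sigma> - ?I c2 \<sigma>\<bar>"
    by (subst Bochner_Integration.integral_diff)
       (auto intro: integrable_indicator_beyond_unit_mult integrable_heat_unif)
  also have "\<dots> \<le> (LINT \<sigma>|lborel. \<bar>?I c1 \<sigma> - ?I c2 \<sigma>\<bar>)"
    by (rule integral_abs_bound)
  also have "\<dots> \<le> (LINT \<sigma>|lborel. \<bar>heat_unif c1 \<sigma> - heat_unif c2 \<sigma>\<bar>)"
    by (intro integral_mono integrable_abs_heat_unif_diff integrable_abs Bochner_Integration.integrable_diff
          integrable_indicator_beyond_unit_mult integrable_heat_unif)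
       (auto simp: indicator_def)
  also have "\<dots> \<le> 2 * sqrt (2/pi) * \<bar>c1 - c2\<bar>"
    using integral_abs_heat_unif_diff_le[of c1 c2] by (simp add: mult_ac)
  finally show ?thesis
    unfolding Dfun_eq_integral_indicator right_diff_distrib[symmetric] abs_mult mult.assoc
    by (rule mult_left_mono) simp
qed

lemma continuous_on_Dfun_heat_unif: "continuous_on S (\<lambda>c. Dfun \<alpha> (heat_unif c))"
proof (rule lipschitz_on_continuous_on)
  show "(\<bar>\<alpha>\<bar> * (2 * sqrt (2/pi)))-lipschitz_on S (\<lambda>c. Dfun \<alpha> (heat_unif c))"
    by (rule lipschitz_onI) (auto simp: dist_real_def Dfun_heat_unif_lipschitz)
qed

lemma heat_unif_ge_on_window:
  assumes c: "0 < c" and pq: "p \<le> q" and M: "\<bar>p\<bar> \<le> M" "\<bar>q\<bar> \<le> M"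
    and window: "\<And>z. z \<in> {p..q} \<Longrightarrow> -1 < \<sigma> - c * z \<and> \<sigma> - c * z < 1"
  shows "(q - p) * std_normal_density M / 2 \<le> heat_unif c \<sigma>"
proof -
  have "(LINT z|lborel. indicator {p..q} z * (std_normal_density M / 2)) \<le> heat_unif c \<sigma>"
    unfolding heat_unif_def
  proof (intro integral_mono integrable_heat_unif_integrand)
    show "integrable lborel (\<lambda>z. indicator {p..q} z * (std_normal_density M / 2))"
      by (intro integrable_mult_left) (simp add: integrable_indicator_iff pq)
    fix z
    show "indicator {p..q} z * (std_normal_density M / 2) \<le> unif_density (\<sigma> - c * z) * std_normal_density z"
    proof (cases "z \<in> {p..q}")
      case True
      then have "z\<^sup>2 \<le> M\<^sup>2"
        using M by (auto simp: abs_le_square_iff[symmetric])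
      then have "std_normal_density M \<le> std_normal_density z"
        unfolding std_normal_density_def by (intro mult_left_mono) auto
      then show ?thesis
        using True window[OF True] by (simp add: indicator_def unif_density_def)
    qed (simp add: unif_density_nonneg)
  qed
  then show ?thesis using pq by simp
qed

lemma Dfun_heat_unif_ge_window:
  assumes "0 \<le> \<alpha>" and "l \<le> r" and "{l..r} \<subseteq> {\<sigma>. 1 < \<bar>\<sigma>\<bar>}"
    and L: "\<And>\<sigma>. \<sigma> \<in> {l..r} \<Longrightarrow> L \<le> heat_unif c \<sigma>"
  shows "\<alpha> * ((r - l) * L) \<le> Dfun \<alpha> (heat_unif c)"
proof -
  have "(LINT \<sigma>|lborel. indicator {l..r} \<sigma> * L)
      \<le> (LINT \<sigma>|lborel. indicator {\<sigma>. 1 < \<bar>\<sigma>\<bar>} \<sigma> * heat_unif c \<sigma>)"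
  proof (intro integral_mono integrable_indicator_beyond_unit_mult integrable_heat_unif)
    show "integrable lborel (\<lambda>\<sigma>. indicator {l..r} \<sigma> * L)"
      by (intro integrable_mult_left) (simp add: integrable_indicator_iff \<open>l \<le> r\<close>)
    show "indicator {l..r} \<sigma> * L \<le> indicator {\<sigma>. 1 < \<bar>\<sigma>\<bar>} \<sigma> * heat_unif c \<sigma>" for \<sigma>
      using assms(3) L[of \<sigma>] by (auto simp: indicator_def heat_unif_nonneg)
  qed
  then show ?thesis
    unfolding Dfun_eq_integral_indicator using assms(1,2) by (simp add: mult_left_mono)
qed

text \<open>
  Mass of order \<open>c\<close> leaves \<open>(-1,1)\<close>: for \<open>\<sigma> \<in> [1 + c/4, 1 + c/2]\<close> the window
  \<open>z \<in> [3/4, 1]\<close> of the Gaussian is mapped into \<open>(-1,1)\<close>.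
\<close>

lemma Dfun_heat_unif_ge_linear:
  assumes "0 \<le> \<alpha>" and c: "0 < c" "c \<le> 2"
  shows "\<alpha> * c * std_normal_density 1 / 32 \<le> Dfun \<alpha> (heat_unif c)"
proof -
  have "\<alpha> * ((1 + c/2 - (1 + c/4)) * ((1 - 3/4) * std_normal_density 1 / 2)) \<le> Dfun \<alpha> (heat_unif c)"
  proof (rule Dfun_heat_unif_ge_window[OF assms(1)])
    show "{1 + c/4..1 + c/2} \<subseteq> {\<sigma>. 1 < \<bar>\<sigma>\<bar>}" using c by auto
    fix \<sigma> assume \<sigma>: "\<sigma> \<in> {1 + c/4..1 + c/2}"
    show "(1 - 3/4) * std_normal_density 1 / 2 \<le> heat_unif c \<sigma>"
    proof (rule heat_unif_ge_on_window[OF c(1)])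
      fix z assume z: "z \<in> {3/4..1::real}"
      then have "c * (3/4) \<le> c * z" "c * z \<le> c"
        using c by (auto simp: mult_le_cancel_left1)
      moreover have "1 + c/4 \<le> \<sigma>" "\<sigma> \<le> 1 + c/2"
        using \<sigma> by auto
      ultimately show "-1 < \<sigma> - c * z \<and> \<sigma> - c * z < 1"
        using c by linarith
    qed auto
  qed (use c in auto)
  then show ?thesis by (simp add: field_simps)
qed

lemma Dfun_heat_unif_pos:
  assumes "0 < \<alpha>" and c: "0 < c"
  shows "0 < Dfun \<alpha> (heat_unif c)"
proof -
  let ?L = "(2.4/c - 1.1/c) * std_normal_density (2.4/c) / 2"
  have "\<alpha> * ((2 - 3/2) * ?L) \<le> Dfun \<alpha> (heat_unif c)"
  proof (rule Dfun_heat_unif_ge_window)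
    fix \<sigma> :: real assume \<sigma>: "\<sigma> \<in> {3/2..2}"
    show "?L \<le> heat_unif c \<sigma>"
    proof (rule heat_unif_ge_on_window[OF c])
      fix z assume "z \<in> {1.1/c..2.4/c}"
      then have "1.1 \<le> c * z" "c * z \<le> 2.4" using c by (auto simp: field_simps)
      then show "-1 < \<sigma> - c * z \<and> \<sigma> - c * z < 1" using \<sigma> by auto
    qed (use c in \<open>auto simp: field_simps\<close>)
  qed (use assms in auto)
  moreover have "0 < \<alpha> * ((2 - 3/2) * ?L)"
    using assms by (intro mult_pos_pos) (auto simp: normal_density_pos field_simps)
  ultimately show ?thesis by linarith
qed

definition F_unif :: "real \<Rightarrow> real \<Rightarrow> real" where
  "F_unif \<alpha> x = Dfun \<alpha> (heat_unif (sqrt (2 * x)))"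

lemma Ffun_unif_density_eq_F_unif: "0 \<le> x \<Longrightarrow> Ffun \<alpha> unif_density x = F_unif \<alpha> x"
  by (simp add: Ffun_unif_density F_unif_def)

lemma continuous_on_F_unif: "continuous_on UNIV (F_unif \<alpha>)"
  unfolding F_unif_def[abs_def]
  by (rule continuous_on_compose2[OF continuous_on_Dfun_heat_unif]) (auto intro!: continuous_intros)

lemma F_unif_pos: "0 < \<alpha> \<Longrightarrow> 0 < x \<Longrightarrow> 0 < F_unif \<alpha> x"
  unfolding F_unif_def by (intro Dfun_heat_unif_pos) auto

lemma F_unif_le: "0 \<le> \<alpha> \<Longrightarrow> F_unif \<alpha> x \<le> \<alpha>"
  unfolding F_unif_def by (rule Dfun_heat_unif_le)

lemma F_unif_ge_sqrt:
  assumes "0 \<le> \<alpha>" and x: "0 < x" "x \<le> 1"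
  shows "\<alpha> * sqrt 2 * std_normal_density 1 / 32 * sqrt x \<le> F_unif \<alpha> x"
proof -
  have "sqrt (2 * x) \<le> sqrt 4"
    using x by (intro real_sqrt_le_mono) auto
  then have "sqrt (2 * x) \<le> 2"
    by (simp add: real_sqrt_eq_iff[symmetric] flip: real_sqrt_abs2)
  then have "\<alpha> * sqrt (2 * x) * std_normal_density 1 / 32 \<le> F_unif \<alpha> x"
    unfolding F_unif_def using assms by (intro Dfun_heat_unif_ge_linear) auto
  then show ?thesis by (simp add: real_sqrt_mult mult_ac)
qed

section \<open>Leaving the origin in an Osgood-type equation\<close>

lemma nn_integral_inverse_finite_if_ge_sqrt:
  fixes F :: "real \<Rightarrow> real"
  assumes k: "0 < k" and F: "\<And>x. 0 < x \<Longrightarrow> x \<le> 1 \<Longrightarrow> k * sqrt x \<le> F x"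
  shows "(\<integral>\<^sup>+x\<in>{0..1}. ennreal (1 / F x) \<partial>lborel) < \<infinity>"
proof -
  have "((\<lambda>x. (1/k) * x powr (-1/2)) has_integral (1/k) * (1 powr (-1/2 + 1) / (-1/2 + 1))) {0..1::real}"
    by (intro has_integral_mult_right has_integral_powr_from_0) auto
  then have finite: "(\<integral>\<^sup>+x. ennreal ((1/k) * x powr (-1/2)) * indicator {0..1} x \<partial>lborel) < \<infinity>"
    by (subst nn_integral_has_integral_lebesgue') (use k in auto)
  have inverse_le: "1 / F x \<le> (1/k) * x powr (-1/2)" if x: "0 < x" "x \<le> 1" for x
  proof -
    have "0 < k * sqrt x"
      using k x by simp
    then have "1 / F x \<le> 1 / (k * sqrt x)"
      using F[OF x] by (intro divide_left_mono) auto
    also have "\<dots> = (1/k) * x powr (-1/2)"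
      using x by (simp add: powr_minus powr_half_sqrt[symmetric] divide_simps)
    finally show ?thesis .
  qed
  have "AE x in lborel.
      ennreal (1 / F x) * indicator {0..1} x \<le> ennreal ((1/k) * x powr (-1/2)) * indicator {0..1} x"
    using AE_lborel_singleton[of 0]
  proof eventually_elim
    case (elim x)
    show ?case
    proof (cases "x \<in> {0..1}")
      case True
      with elim have "1 / F x \<le> (1/k) * x powr (-1/2)"
        by (intro inverse_le) auto
      then show ?thesis
        using True by (simp add: ennreal_leI)
    qed simp
  qed
  then have "(\<integral>\<^sup>+x\<in>{0..1}. ennreal (1 / F x) \<partial>lborel)
      \<le> (\<integral>\<^sup>+x. ennreal ((1/k) * x powr (-1/2)) * indicator {0..1} x \<partial>lborel)"
    by (rule nn_integral_mono_AE)
  with finite show ?thesis by order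
qed

text \<open>
  A solution of \<open>\<tau>' = F(\<tau>)\<close> that leaves \<open>0\<close> at time \<open>0\<close> is the inverse of the travel time
  \<open>x \<mapsto> \<integral>\<^sub>0\<^sup>x 1/F\<close>, which is finite because \<open>1/F\<close> is integrable at \<open>0\<close>.  The slowness
  is set to \<open>1/B\<close> on \<open>(-\<infinity>,0]\<close> only to make it a total function with a positive lower bound.
\<close>

locale osgood_ode =
  fixes F :: "real \<Rightarrow> real" and B :: real
  assumes continuous: "continuous_on UNIV F"
    and pos: "\<And>x. 0 < x \<Longrightarrow> 0 < F x"
    and le_bound: "\<And>x. F x \<le> B"
    and inverse_integrable: "(\<integral>\<^sup>+x\<in>{0..1}. ennreal (1 / F x) \<partial>lborel) < \<infinity>"
begin

lemma bound_pos: "0 < B"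
  using pos[of 1] le_bound[of 1] by simp

definition slowness :: "real \<Rightarrow> real" where
  "slowness y = (if y \<le> 0 then 1 / B else 1 / F y)"

definition travel_time :: "real \<Rightarrow> real" where
  "travel_time x = integral {0..x} slowness"

lemma F_measurable[measurable]: "F \<in> borel_measurable borel"
  using continuous by (rule borel_measurable_continuous_onI)

lemma slowness_measurable[measurable]: "slowness \<in> borel_measurable borel"
  unfolding slowness_def[abs_def] by measurable

lemma slowness_ge: "1 / B \<le> slowness y"
  using pos[of y] le_bound[of y] bound_pos by (auto simp: slowness_def divide_simps)

lemma continuous_on_slowness:
  assumes "0 < a"
  shows "continuous_on {a..b} slowness"
proof -
  have "F y \<noteq> 0" if "y \<in> {a..b}" for y
    using pos[of y] that assms by auto
  then have "continuous_on {a..b} (\<lambda>y. 1 / F y)"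
    by (intro continuous_intros continuous_on_subset[OF continuous]) auto
  then show ?thesis
    by (rule continuous_on_eq) (use assms in \<open>auto simp: slowness_def\<close>)
qed

lemma slowness_integrable_01: "slowness integrable_on {0..1}"
proof -
  have ae: "AE x in lborel. ennreal (norm (indicator {0..1} x *\<^sub>R slowness x))
      = ennreal (1 / F x) * indicator {0..1} x"
    using AE_lborel_singleton[of 0]
    by eventually_elim (auto simp: indicator_def slowness_def not_le abs_of_pos pos)
  have "(\<integral>\<^sup>+x. ennreal (norm (indicator {0..1} x *\<^sub>R slowness x)) \<partial>lborel)
      = (\<integral>\<^sup>+x\<in>{0..1}. ennreal (1 / F x) \<partial>lborel)"
    by (rule nn_integral_cong_AE[OF ae])
  with inverse_integrable
  have "(\<integral>\<^sup>+x. ennreal (norm (indicator {0..1} x *\<^sub>R slowness x)) \<partial>lborel) < \<infinity>"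
    by simp
  then have "set_integrable lborel {0..1} slowness"
    unfolding set_integrable_def by (intro integrableI_bounded) measurable
  then show ?thesis
    by (rule set_borel_integral_eq_integral(1))
qed

lemma slowness_integrable: "0 \<le> X \<Longrightarrow> slowness integrable_on {0..X}"
proof (cases "X \<le> 1")
  case True
  then show ?thesis
    by (intro integrable_on_subinterval[OF slowness_integrable_01]) auto
next
  case False
  have "slowness integrable_on {1..X}"
    by (intro integrable_continuous_interval continuous_on_slowness) simp
  then show ?thesis
    using False slowness_integrable_01
    by (intro Henstock_Kurzweil_Integration.integrable_combine[of 0 1 X]) auto
qed

lemma travel_time_0: "travel_time 0 = 0"
  by (simp add: travel_time_def)

lemma travel_time_diff: "0 \<le> x \<Longrightarrow> x \<le> y \<Longrightarrow> travel_time y - travel_time x = integral {x..y} slowness"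
  using Henstock_Kurzweil_Integration.integral_combine[of 0 x y slowness] slowness_integrable[of y]
  by (simp add: travel_time_def)

lemma travel_time_increment_ge:
  assumes "0 \<le> x" "x \<le> y"
  shows "(y - x) / B \<le> travel_time y - travel_time x"
proof -
  have "integral {x..y} (\<lambda>_. 1 / B) \<le> integral {x..y} slowness"
    using assms
    by (intro integral_le integrable_on_subinterval[OF slowness_integrable[of y]] slowness_ge) auto
  then show ?thesis
    using assms travel_time_diff[OF assms] by simp
qed

lemma travel_time_ge: "0 \<le> x \<Longrightarrow> x / B \<le> travel_time x"
  using travel_time_increment_ge[of 0 x] by (simp add: travel_time_0)

lemma travel_time_strict_mono: "0 \<le> x \<Longrightarrow> x < y \<Longrightarrow> travel_time x < travel_time y"
  using travel_time_increment_ge[of x y] bound_pos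
  by (smt (verit) divide_pos_pos)

lemma continuous_on_travel_time: "continuous_on {0..X} travel_time"
  by (cases "0 \<le> X")
     (auto simp: travel_time_def intro!: indefinite_integral_continuous_1 slowness_integrable)

lemma travel_time_deriv:
  assumes x: "0 < x"
  shows "(travel_time has_real_derivative slowness x) (at x)"
proof -
  have "((\<lambda>u. integral {x/2..u} slowness) has_real_derivative slowness x) (at x within {x/2..2*x})"
    by (rule integral_has_real_derivative[OF continuous_on_slowness]) (use x in auto)
  moreover have "x \<in> interior {x/2..2*x}"
    using x by (simp add: interior_atLeastAtMost_real)
  ultimately have "((\<lambda>u. integral {x/2..u} slowness) has_real_derivative slowness x) (at x)"
    by (simp only: at_within_interior)
  from DERIV_add[OF DERIV_const this]
  have "((\<lambda>u. travel_time (x/2) + integral {x/2..u} slowness) has_real_derivative slowness x) (at x)"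
    by (simp only: add_0_left)
  then show ?thesis
  proof (rule has_field_derivative_transform_within_open)
    fix u assume "u \<in> {x/2<..<2*x}"
    then show "travel_time (x/2) + integral {x/2..u} slowness = travel_time u"
      using travel_time_diff[of "x/2" u] x by simp
  qed (use x in auto)
qed

lemma bij_betw_travel_time: "bij_betw travel_time {0..} {0..}"
proof (rule bij_betw_imageI)
  show "inj_on travel_time {0..}"
    by (rule linorder_inj_onI') (metis atLeast_iff order_less_irrefl travel_time_strict_mono)
  show "travel_time ` {0..} = {0..}"
  proof (intro equalityI subsetI)
    fix t assume "t \<in> travel_time ` {0..}"
    then show "t \<in> {0..}"
      using travel_time_ge bound_pos by (fastforce intro: order_trans[rotated])
  next
    fix t :: real assume "t \<in> {0..}"
    then have "travel_time 0 \<le> t" "t \<le> travel_time (B * t)" "0 \<le> B * t"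
      using travel_time_0 travel_time_ge[of "B * t"] bound_pos by auto
    from IVT'[OF this continuous_on_travel_time] show "t \<in> travel_time ` {0..}"
      by force
  qed
qed

definition position :: "real \<Rightarrow> real" where
  "position t = inv_into {0..} travel_time (max t 0)"

lemma travel_time_position: "0 \<le> t \<Longrightarrow> travel_time (position t) = t"
  using bij_betw_travel_time by (simp add: position_def bij_betw_def f_inv_into_f)

lemma position_nonneg: "0 \<le> position t"
proof -
  have "max t 0 \<in> travel_time ` {0..}"
    using bij_betw_travel_time by (simp add: bij_betw_def)
  from inv_into_into[OF this] show ?thesis
    by (simp add: position_def)
qed

lemma position_travel_time:
  assumes "0 \<le> x"
  shows "position (travel_time x) = x"
proof -
  have "0 \<le> travel_time x"
    using travel_time_ge[OF assms] assms bound_pos by (smt (verit) divide_nonneg_pos)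
  then show ?thesis
    using bij_betw_travel_time assms by (simp add: position_def bij_betw_def inv_into_f_f)
qed

lemma position_zero: "t \<le> 0 \<Longrightarrow> position t = 0"
  using position_travel_time[of 0] by (simp add: position_def max_def travel_time_0)

lemma position_pos: "0 < t \<Longrightarrow> 0 < position t"
  using travel_time_position[of t] position_nonneg[of t] travel_time_0
  by (auto simp: order_le_less)

lemma continuous_position: "continuous_on UNIV position"
proof (rule continuous_at_imp_continuous_on, intro ballI)
  fix t :: real
  define N where "N = max t 0 + 1"
  have "continuous_on (travel_time ` {0..B * N}) position"
    by (rule continuous_on_inv[OF continuous_on_travel_time]) (auto simp: position_travel_time)
  moreover have "{0..N} \<subseteq> travel_time ` {0..B * N}"
  proof
    fix t assume t: "t \<in> {0..N}"
    have "position t / B \<le> t"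
      using travel_time_ge[OF position_nonneg, of t] travel_time_position[of t] t by simp
    then have "position t \<le> B * t"
      using bound_pos by (simp add: field_simps)
    moreover have "B * t \<le> B * N"
      using t bound_pos by (intro mult_left_mono) auto
    ultimately have "position t \<in> {0..B * N}"
      using position_nonneg[of t] by simp
    then show "t \<in> travel_time ` {0..B * N}"
      using travel_time_position[of t] t by force
  qed
  ultimately have "continuous_on {0..N} position"
    by (rule continuous_on_subset)
  then have "continuous_on {..<N} (\<lambda>t. position (max t 0))"
    by (rule continuous_on_compose2) (auto simp: N_def intro!: continuous_intros)
  moreover have "position (max t 0) = position t" for t
    by (simp add: position_def)
  ultimately show "isCont position t"
    by (intro continuous_on_interior[of "{..<N}"]) (auto simp: N_def interior_open)
qed

lemma position_deriv:
  assumes t: "0 < t"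
  shows "(position has_real_derivative F (position t)) (at t)"
proof -
  have "(position has_real_derivative inverse (slowness (position t))) (at t)"
  proof (rule DERIV_inverse_function[where a=0 and b="t+1"])
    show "(travel_time has_real_derivative slowness (position t)) (at (position t))"
      by (rule travel_time_deriv[OF position_pos[OF t]])
    show "slowness (position t) \<noteq> 0"
      using slowness_ge[of "position t"] bound_pos by auto
    show "isCont position t"
      using continuous_position by (simp add: continuous_on_eq_continuous_at)
  qed (use t travel_time_position in auto)
  then show ?thesis
    using position_pos[OF t] pos[OF position_pos[OF t]] by (simp add: slowness_def)
qed

end

section \<open>Test functions\<close>

lemma smooth2_partials:
  assumes "smooth2 f"
  shows "continuous_on UNIV (\<lambda>z. f (fst z) (snd z))"
    and "((\<lambda>\<tau>. f \<tau> s) has_real_derivative pd_t f t s) (at t)"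
    and "((\<lambda>\<rho>. f t \<rho>) has_real_derivative pd_s f t s) (at s)"
    and "smooth2 (pd_t f)" and "smooth2 (pd_s f)"
proof -
  obtain f1 f2 where cont: "continuous_on UNIV (\<lambda>z. f (fst z) (snd z))"
    and d1: "\<And>t s. ((\<lambda>\<tau>. f \<tau> s) has_real_derivative f1 t s) (at t)"
    and d2: "\<And>t s. ((\<lambda>\<rho>. f t \<rho>) has_real_derivative f2 t s) (at s)"
    and "smooth2 f1" "smooth2 f2"
    using assms by (cases rule: smooth2.cases) blast
  moreover have "pd_t f = f1" "pd_s f = f2"
    using d1 d2 by (auto intro!: ext simp: pd_t_def pd_s_def DERIV_imp_deriv)
  ultimately show "continuous_on UNIV (\<lambda>z. f (fst z) (snd z))"
    "((\<lambda>\<tau>. f \<tau> s) has_real_derivative pd_t f t s) (at t)"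
    "((\<lambda>\<rho>. f t \<rho>) has_real_derivative pd_s f t s) (at s)"
    "smooth2 (pd_t f)" "smooth2 (pd_s f)"
    by auto
qed

lemma deriv_vanishes_off_square:
  fixes f :: "real \<Rightarrow> real \<Rightarrow> real"
  assumes support: "\<And>t s. f t s \<noteq> 0 \<Longrightarrow> \<bar>t\<bar> \<le> R \<and> \<bar>s\<bar> \<le> R"
    and deriv: "((\<lambda>\<tau>. f \<tau> s) has_real_derivative D) (at t)" and "D \<noteq> 0"
  shows "\<bar>t\<bar> \<le> R \<and> \<bar>s\<bar> \<le> R"
proof (rule ccontr)
  assume outside: "\<not> (\<bar>t\<bar> \<le> R \<and> \<bar>s\<bar> \<le> R)"
  define d where "d = (if R < \<bar>s\<bar> then 1 else \<bar>t\<bar> - R)"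
  have "0 < d"
    using outside by (auto simp: d_def)
  moreover have zero: "f y s = 0" if "\<bar>t - y\<bar> < d" for y
  proof -
    have "R < \<bar>y\<bar> \<or> R < \<bar>s\<bar>"
      using that outside by (auto simp: d_def split: if_splits)
    then show ?thesis
      using support[of y s] by force
  qed
  ultimately have "\<forall>y. \<bar>t - y\<bar> < d \<longrightarrow> f t s = f y s"
    by simp
  with \<open>0 < d\<close> have "D = 0"
    by (rule DERIV_local_const[OF deriv])
  with \<open>D \<noteq> 0\<close> show False ..
qed

lemma bounded_if_continuous_vanishing_off_square:
  fixes f :: "real \<Rightarrow> real \<Rightarrow> real"
  assumes cont: "continuous_on UNIV (\<lambda>z. f (fst z) (snd z))"
    and support: "\<And>t s. f t s \<noteq> 0 \<Longrightarrow> \<bar>t\<bar> \<le> R \<and> \<bar>s\<bar> \<le> R"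
  obtains M where "\<And>t s. \<bar>f t s\<bar> \<le> M"
proof -
  have "compact ((\<lambda>z. f (fst z) (snd z)) ` ({-R..R} \<times> {-R..R}))"
    by (intro compact_continuous_image continuous_on_subset[OF cont] compact_Times) auto
  then obtain M where M: "\<And>y. y \<in> (\<lambda>z. f (fst z) (snd z)) ` ({-R..R} \<times> {-R..R}) \<Longrightarrow> norm y \<le> M"
    using compact_imp_bounded bounded_iff by metis
  have "\<bar>f t s\<bar> \<le> max M 0" for t s
  proof (cases "f t s = 0")
    case False
    then have "(t, s) \<in> {-R..R} \<times> {-R..R}"
      using support[of t s] by auto
    then show ?thesis
      using M[of "f t s"] by force
  qed simp
  then show ?thesis
    using that by blast
qed

lemma continuous_on_slice:
  fixes f :: "real \<Rightarrow> real \<Rightarrow> real"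
  assumes "continuous_on UNIV (\<lambda>z. f (fst z) (snd z))"
  shows "continuous_on S (f t)"
proof -
  have "continuous_on S (\<lambda>s. (\<lambda>z. f (fst z) (snd z)) (t, s))"
    by (rule continuous_on_compose2[OF assms]) (auto intro!: continuous_intros)
  then show ?thesis by simp
qed

lemma integral_unif_density_mult:
  fixes h :: "real \<Rightarrow> real"
  assumes h: "continuous_on UNIV h"
  shows "integrable lborel (\<lambda>s. unif_density s * h s)"
    and "(LINT s|lborel. unif_density s * h s) = integral {-1..1} (\<lambda>s. h s / 2)"
proof -
  obtain M where M: "\<And>y. y \<in> h ` {-1..1} \<Longrightarrow> norm y \<le> M"
    using compact_imp_bounded[OF compact_continuous_image[OF continuous_on_subset[OF h]]] bounded_iff
    by (metis compact_Icc subset_UNIV)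
  have bound: "\<bar>unif_density s * h s\<bar> \<le> M" for s
  proof (cases "s \<in> {-1..1}")
    case True
    then have "\<bar>unif_density s\<bar> * \<bar>h s\<bar> \<le> 1 * M"
      using M[of "h s"] unif_density_nonneg[of s] unif_density_le[of s]
      by (intro mult_mono) auto
    then show ?thesis by (simp add: abs_mult)
  next
    case False
    then show ?thesis using M[of "h 0"] by (auto simp: unif_density_def)
  qed
  have outside: "s \<notin> {-1..1} \<Longrightarrow> unif_density s * h s = 0" for s
    by (auto simp: unif_density_def)
  have h_meas: "h \<in> borel_measurable borel"
    using h by (rule borel_measurable_continuous_onI)
  note Icc = lborel_integral_eq_integral_Icc[of "\<lambda>s. unif_density s * h s", OF _ bound outside]
  show "integrable lborel (\<lambda>s. unif_density s * h s)"
    using Icc h_meas by simp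
  have "(LINT s|lborel. unif_density s * h s) = integral {-1..1} (\<lambda>s. unif_density s * h s)"
    using Icc h_meas by simp
  also have "\<dots> = integral {-1..1} (\<lambda>s. h s / 2)"
    by (rule integral_spike[of "{-1,1}"]) (auto simp: unif_density_def)
  finally show "(LINT s|lborel. unif_density s * h s) = integral {-1..1} (\<lambda>s. h s / 2)" .
qed

locale test_function =
  fixes \<phi> :: "real \<Rightarrow> real \<Rightarrow> real" and R :: real
  assumes smooth: "smooth2 \<phi>" and R_pos: "0 < R"
    and support: "\<And>t s. \<phi> t s \<noteq> 0 \<Longrightarrow> \<bar>t\<bar> \<le> R \<and> \<bar>s\<bar> \<le> R"
begin

lemma smooth_pd_t: "smooth2 (pd_t \<phi>)"
  and smooth_pd_s: "smooth2 (pd_s \<phi>)"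
  and smooth_pd_ss: "smooth2 (pd_s (pd_s \<phi>))"
  using smooth2_partials(4,5)[OF smooth] smooth2_partials(5)[of "pd_s \<phi>"] by auto

lemmas deriv_t = smooth2_partials(2)[OF smooth]
lemmas deriv_s = smooth2_partials(3)[OF smooth]
lemmas deriv_ss = smooth2_partials(3)[OF smooth_pd_s]

lemma support_pd_t: "pd_t \<phi> t s \<noteq> 0 \<Longrightarrow> \<bar>t\<bar> \<le> R \<and> \<bar>s\<bar> \<le> R"
  by (rule deriv_vanishes_off_square[OF support deriv_t])

lemma support_pd_s: "pd_s \<phi> t s \<noteq> 0 \<Longrightarrow> \<bar>t\<bar> \<le> R \<and> \<bar>s\<bar> \<le> R"
  using deriv_vanishes_off_square[of "\<lambda>s t. \<phi> t s" R t, OF _ deriv_s] support by blast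

lemma support_pd_ss: "pd_s (pd_s \<phi>) t s \<noteq> 0 \<Longrightarrow> \<bar>t\<bar> \<le> R \<and> \<bar>s\<bar> \<le> R"
  using deriv_vanishes_off_square[of "\<lambda>s t. pd_s \<phi> t s" R t, OF _ deriv_ss] support_pd_s by blast

lemma continuous: "continuous_on UNIV (\<lambda>z. \<phi> (fst z) (snd z))"
  and continuous_pd_t: "continuous_on UNIV (\<lambda>z. pd_t \<phi> (fst z) (snd z))"
  and continuous_pd_ss: "continuous_on UNIV (\<lambda>z. pd_s (pd_s \<phi>) (fst z) (snd z))"
  using smooth2_partials(1) smooth smooth_pd_t smooth_pd_ss by blast+

lemma measurable_partials[measurable (raw)]:
  "f \<in> M \<rightarrow>\<^sub>M borel \<Longrightarrow> g \<in> M \<rightarrow>\<^sub>M borel \<Longrightarrow> (\<lambda>x. \<phi> (f x) (g x)) \<in> borel_measurable M"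
  "f \<in> M \<rightarrow>\<^sub>M borel \<Longrightarrow> g \<in> M \<rightarrow>\<^sub>M borel \<Longrightarrow> (\<lambda>x. pd_t \<phi> (f x) (g x)) \<in> borel_measurable M"
  "f \<in> M \<rightarrow>\<^sub>M borel \<Longrightarrow> g \<in> M \<rightarrow>\<^sub>M borel \<Longrightarrow> (\<lambda>x. pd_s (pd_s \<phi>) (f x) (g x)) \<in> borel_measurable M"
  by (rule measurable_compose_uncurry[OF borel_measurable_continuous_onI],
      rule continuous continuous_pd_t continuous_pd_ss, assumption+)+

lemma bounded: obtains M where "\<And>t s. \<bar>\<phi> t s\<bar> \<le> M"
  using bounded_if_continuous_vanishing_off_square[OF continuous support] by blast

lemma bounded_pd_t: obtains M where "\<And>t s. \<bar>pd_t \<phi> t s\<bar> \<le> M"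
  using bounded_if_continuous_vanishing_off_square[OF continuous_pd_t support_pd_t] by blast

lemma bounded_pd_ss: obtains M where "\<And>t s. \<bar>pd_s (pd_s \<phi>) t s\<bar> \<le> M"
  using bounded_if_continuous_vanishing_off_square[OF continuous_pd_ss support_pd_ss] by blast

lemma vanishes_outside: "\<bar>s\<bar> > R \<or> \<bar>t\<bar> > R \<Longrightarrow> \<phi> t s = 0 \<and> pd_t \<phi> t s = 0 \<and> pd_s \<phi> t s = 0 \<and> pd_s (pd_s \<phi>) t s = 0"
  using support[of t s] support_pd_t[of t s] support_pd_s[of t s] support_pd_ss[of t s] by force

definition initial_pairing :: "real \<Rightarrow> real" where
  "initial_pairing t = integral {-1..1} (\<lambda>s. \<phi> t s / 2)"

lemma initial_pairing_deriv:
  "(initial_pairing has_real_derivative integral {-1..1} (\<lambda>s. pd_t \<phi> t s / 2)) (at t)"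
proof -
  have "((\<lambda>u. integral (cbox (-1) 1) (\<lambda>s. \<phi> u s / 2)) has_real_derivative
          integral (cbox (-1) 1) (\<lambda>s. pd_t \<phi> t s / 2)) (at t within UNIV)"
  proof (rule leibniz_rule_field_derivative)
    fix x s :: real
    show "((\<lambda>x. \<phi> x s / 2) has_real_derivative pd_t \<phi> x s / 2) (at x within UNIV)"
      using deriv_t[of s x] by (auto intro!: derivative_eq_intros)
  next
    fix x :: real
    show "(\<lambda>s. \<phi> x s / 2) integrable_on cbox (-1) 1"
      by (intro integrable_continuous continuous_intros continuous_on_slice[OF continuous]) auto
  next
    have "continuous_on (UNIV \<times> cbox (-1) 1) (\<lambda>z. pd_t \<phi> (fst z) (snd z) / 2)"
      by (intro continuous_intros continuous_on_subset[OF continuous_pd_t]) auto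
    then show "continuous_on (UNIV \<times> cbox (-1) 1) (\<lambda>(x, s). pd_t \<phi> x s / 2)"
      by (simp add: case_prod_beta')
  qed auto
  then show ?thesis
    by (simp add: initial_pairing_def[abs_def])
qed

lemma integration_by_parts_heat_cf:
  assumes c: "0 < c"
  shows "integral {-2*R..2*R} (\<lambda>s. heat_cf_dss c s * \<phi> t s)
       = integral {-2*R..2*R} (\<lambda>s. heat_cf c s * pd_s (pd_s \<phi>) t s)"
proof -
  define H where "H s = heat_cf_ds c s * \<phi> t s - heat_cf c s * pd_s \<phi> t s" for s
  have "((\<lambda>s. heat_cf_dss c s * \<phi> t s - heat_cf c s * pd_s (pd_s \<phi>) t s) has_integral (H (2*R) - H (-2*R)))
      {-2*R..2*R}"
  proof (rule fundamental_theorem_of_calculus)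
    fix x assume "x \<in> {-2*R..2*R}"
    have "(H has_real_derivative heat_cf_dss c x * \<phi> t x + heat_cf_ds c x * pd_s \<phi> t x
        - (heat_cf_ds c x * pd_s \<phi> t x + heat_cf c x * pd_s (pd_s \<phi>) t x)) (at x)"
      unfolding H_def
      by (auto intro!: derivative_eq_intros heat_cf_ds_deriv_s[OF c] heat_cf_deriv_s[OF c] deriv_s deriv_ss)
    then show "(H has_vector_derivative heat_cf_dss c x * \<phi> t x - heat_cf c x * pd_s (pd_s \<phi>) t x)
        (at x within {-2*R..2*R})"
      by (simp add: has_real_derivative_iff_has_vector_derivative[symmetric] has_field_derivative_at_within)
  qed (use R_pos in simp)
  moreover have "H (2*R) = 0" "H (-2*R) = 0"
    using vanishes_outside[of "2*R" t] vanishes_outside[of "-2*R" t] R_pos by (auto simp: H_def)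
  ultimately have "((\<lambda>s. heat_cf_dss c s * \<phi> t s - heat_cf c s * pd_s (pd_s \<phi>) t s) has_integral 0)
      {-2*R..2*R}"
    by simp
  moreover have "(\<lambda>s. heat_cf_dss c s * \<phi> t s) integrable_on {-2*R..2*R}"
    "(\<lambda>s. heat_cf c s * pd_s (pd_s \<phi>) t s) integrable_on {-2*R..2*R}"
    using c by (auto intro!: integrable_continuous_interval continuous_intros
        continuous_on_slice[OF continuous] continuous_on_slice[OF continuous_pd_ss])
  ultimately have "integral {-2*R..2*R} (\<lambda>s. heat_cf_dss c s * \<phi> t s)
      - integral {-2*R..2*R} (\<lambda>s. heat_cf c s * pd_s (pd_s \<phi>) t s) = 0"
    using integral_diff[of "\<lambda>s. heat_cf_dss c s * \<phi> t s" "{-2*R..2*R}" "\<lambda>s. heat_cf c s * pd_s (pd_s \<phi>) t s"]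
      integral_unique by metis
  then show ?thesis
    by simp
qed

end

section \<open>Smoothings along a time-changed heat flow are weak solutions\<close>

text \<open>
  \<open>heat_unif (c t)\<close> solves \<open>\<partial>\<^sub>t u = c c' \<partial>\<^sub>\<sigma>\<^sub>\<sigma> u\<close> weakly: its pairing with \<open>\<phi> t\<close> is
  differentiable with derivative \<open>pairing_deriv\<close> (by the closed form after \<open>T\<close>, where
  \<open>c > 0\<close>), continuous at \<open>T\<close>, and compactly supported, so \<open>pairing_deriv\<close> integrates to \<open>0\<close>.
\<close>

locale heat_path = test_function \<phi> R for \<phi> R +
  fixes c c' :: "real \<Rightarrow> real" and T Dmax :: real
  assumes continuous_width: "continuous_on UNIV c"
    and width_zero: "\<And>t. t \<le> T \<Longrightarrow> c t = 0"
    and width_pos: "\<And>t. T < t \<Longrightarrow> 0 < c t"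
    and width_deriv: "\<And>t. T < t \<Longrightarrow> (c has_real_derivative c' t) (at t)"
    and continuous_width': "continuous_on {T<..} c'"
    and width'_measurable[measurable]: "c' \<in> borel_measurable borel"
    and diffusivity_bound: "\<And>t. \<bar>c t * c' t\<bar> \<le> Dmax"
begin

lemma width_measurable[measurable]: "c \<in> borel_measurable borel"
  using continuous_width by (rule borel_measurable_continuous_onI)

definition weak_integrand :: "real \<Rightarrow> real \<Rightarrow> real" where
  "weak_integrand t s = heat_unif (c t) s * (pd_t \<phi> t s + c t * c' t * pd_s (pd_s \<phi>) t s)"

definition pairing :: "real \<Rightarrow> real" where
  "pairing t = (LINT s|lborel. heat_unif (c t) s * \<phi> t s)"

definition pairing_deriv :: "real \<Rightarrow> real" where
  "pairing_deriv t = (LINT s|lborel. weak_integrand t s)"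

lemma weak_integrand_bound:
  obtains M where "\<And>t s. \<bar>weak_integrand t s\<bar> \<le> M"
proof -
  obtain M1 where M1: "\<And>t s. \<bar>pd_t \<phi> t s\<bar> \<le> M1" using bounded_pd_t by blast
  obtain M2 where M2: "\<And>t s. \<bar>pd_s (pd_s \<phi>) t s\<bar> \<le> M2" using bounded_pd_ss by blast
  have "\<bar>weak_integrand t s\<bar> \<le> M1 + Dmax * M2" for t s
  proof -
    have "\<bar>c t * c' t * pd_s (pd_s \<phi>) t s\<bar> \<le> Dmax * M2"
      unfolding abs_mult[of "c t * c' t"]
      using diffusivity_bound[of t] M2[of t s] by (intro mult_mono) auto
    then have "\<bar>pd_t \<phi> t s + c t * c' t * pd_s (pd_s \<phi>) t s\<bar> \<le> M1 + Dmax * M2"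
      using M1[of t s] abs_triangle_ineq[of "pd_t \<phi> t s" "c t * c' t * pd_s (pd_s \<phi>) t s"]
      by linarith
    then have "\<bar>heat_unif (c t) s\<bar> * \<bar>pd_t \<phi> t s + c t * c' t * pd_s (pd_s \<phi>) t s\<bar> \<le> 1 * (M1 + Dmax * M2)"
      using abs_heat_unif_le_1 by (intro mult_mono) auto
    then show ?thesis
      by (simp add: weak_integrand_def abs_mult)
  qed
  then show ?thesis
    using that by blast
qed

lemma weak_integrand_vanishes: "\<bar>s\<bar> > R \<or> \<bar>t\<bar> > R \<Longrightarrow> weak_integrand t s = 0"
  using vanishes_outside[of s t] by (simp add: weak_integrand_def)

lemma integrable_pairing_integrand: "integrable lborel (\<lambda>s. heat_unif (c t) s * \<phi> t s)"
  and pairing_eq_integral: "pairing t = integral {-2*R..2*R} (\<lambda>s. heat_unif (c t) s * \<phi> t s)"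
proof -
  obtain M where M: "\<And>t s. \<bar>\<phi> t s\<bar> \<le> M" using bounded by blast
  have "\<bar>heat_unif (c t) s\<bar> * \<bar>\<phi> t s\<bar> \<le> 1 * M" for s
    using abs_heat_unif_le_1 M by (intro mult_mono) auto
  then have bound: "\<bar>heat_unif (c t) s * \<phi> t s\<bar> \<le> M" for s
    by (simp add: abs_mult)
  have zero: "s \<notin> {-2*R..2*R} \<Longrightarrow> heat_unif (c t) s * \<phi> t s = 0" for s
    using vanishes_outside[of s t] R_pos by auto
  have "(\<lambda>s. heat_unif (c t) s * \<phi> t s) \<in> borel_measurable borel"
    by measurable
  from lborel_integral_eq_integral_Icc[OF this bound zero]
  show "integrable lborel (\<lambda>s. heat_unif (c t) s * \<phi> t s)"
    and "pairing t = integral {-2*R..2*R} (\<lambda>s. heat_unif (c t) s * \<phi> t s)"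
    unfolding pairing_def by blast+
qed

lemma pairing_deriv_eq_integral: "pairing_deriv t = integral {-2*R..2*R} (weak_integrand t)"
proof -
  obtain M where bound: "\<And>t s. \<bar>weak_integrand t s\<bar> \<le> M" using weak_integrand_bound by blast
  have zero: "s \<notin> {-2*R..2*R} \<Longrightarrow> weak_integrand t s = 0" for s
    using weak_integrand_vanishes[of s t] R_pos by auto
  have "weak_integrand t \<in> borel_measurable borel"
    unfolding weak_integrand_def by measurable
  from lborel_integral_eq_integral_Icc(2)[OF this bound zero] show ?thesis
    unfolding pairing_deriv_def .
qed

lemma pairing_before: "t \<le> T \<Longrightarrow> pairing t = initial_pairing t"
  using integral_unif_density_mult(2)[OF continuous_on_slice[OF continuous]]
  by (simp add: pairing_def initial_pairing_def width_zero heat_unif_0)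

lemma pairing_deriv_before: "t \<le> T \<Longrightarrow> pairing_deriv t = integral {-1..1} (\<lambda>s. pd_t \<phi> t s / 2)"
  using integral_unif_density_mult(2)[OF continuous_on_slice[OF continuous_pd_t]]
  by (simp add: pairing_deriv_def weak_integrand_def width_zero heat_unif_0)

lemma pairing_has_deriv_before:
  assumes t: "t < T"
  shows "(pairing has_real_derivative pairing_deriv t) (at t)"
proof -
  have "(initial_pairing has_real_derivative pairing_deriv t) (at t)"
    using initial_pairing_deriv[of t] t by (simp add: pairing_deriv_before)
  then show ?thesis
  proof (rule has_field_derivative_transform_within_open)
    fix u assume "u \<in> {..<T}"
    then show "initial_pairing u = pairing u"
      by (simp add: pairing_before)
  qed (use t in auto)
qed

lemma heat_cf_pairing_deriv:
  assumes t: "T < t"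
  shows "((\<lambda>u. integral {-2*R..2*R} (\<lambda>s. heat_cf (c u) s * \<phi> u s)) has_real_derivative
      integral {-2*R..2*R} (\<lambda>s. c t * heat_cf_dss (c t) s * c' t * \<phi> t s + heat_cf (c t) s * pd_t \<phi> t s)) (at t)"
proof -
  define U where "U = {T<..}"
  have U: "open U" "convex U" "t \<in> U"
    using t by (auto simp: U_def)
  have nonzero: "x \<in> U \<Longrightarrow> c x \<noteq> 0" for x
    using width_pos[of x] by (auto simp: U_def)
  have "((\<lambda>u. integral (cbox (-2*R) (2*R)) (\<lambda>s. heat_cf (c u) s * \<phi> u s)) has_real_derivative
      integral (cbox (-2*R) (2*R)) (\<lambda>s. c t * heat_cf_dss (c t) s * c' t * \<phi> t s + heat_cf (c t) s * pd_t \<phi> t s))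
      (at t within U)"
  proof (rule leibniz_rule_field_derivative[OF _ _ _ U(3,2)])
    fix x s assume x: "x \<in> U"
    have "0 < c x"
      using x width_pos by (simp add: U_def)
    moreover have "(c has_real_derivative c' x) (at x within U)"
      using width_deriv[of x] x by (auto simp: U_def intro: has_field_derivative_at_within)
    ultimately have "((\<lambda>u. heat_cf (c u) s) has_real_derivative c x * heat_cf_dss (c x) s * c' x) (at x within U)"
      by (rule heat_cf_deriv_width)
    from DERIV_mult[OF this has_field_derivative_at_within[OF deriv_t[of s x]]]
    show "((\<lambda>x. heat_cf (c x) s * \<phi> x s) has_real_derivative
        c x * heat_cf_dss (c x) s * c' x * \<phi> x s + heat_cf (c x) s * pd_t \<phi> x s) (at x within U)"
      by (simp add: mult.commute)
  next
    fix x assume "x \<in> U"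
    then show "(\<lambda>s. heat_cf (c x) s * \<phi> x s) integrable_on cbox (-2*R) (2*R)"
      using nonzero by (intro integrable_continuous continuous_intros continuous_on_slice[OF continuous]) auto
  next
    have "continuous_on (U \<times> cbox (-2*R) (2*R)) (\<lambda>z. c (fst z) * heat_cf_dss (c (fst z)) (snd z) * c' (fst z)
        * \<phi> (fst z) (snd z) + heat_cf (c (fst z)) (snd z) * pd_t \<phi> (fst z) (snd z))"
      using nonzero
      by (intro continuous_intros continuous_on_subset[OF continuous] continuous_on_subset[OF continuous_pd_t]
          continuous_on_compose2[OF continuous_width] continuous_on_compose2[OF continuous_width', of _ fst])
         (auto simp: U_def)
    then show "continuous_on (U \<times> cbox (-2*R) (2*R)) (\<lambda>(x, s). c x * heat_cf_dss (c x) s * c' x * \<phi> x s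
        + heat_cf (c x) s * pd_t \<phi> x s)"
      by (simp add: case_prod_beta')
  qed
  then show ?thesis
    by (simp add: at_within_open[OF U(3,1)])
qed

lemma pairing_deriv_after:
  assumes t: "T < t"
  shows "integral {-2*R..2*R} (\<lambda>s. c t * heat_cf_dss (c t) s * c' t * \<phi> t s + heat_cf (c t) s * pd_t \<phi> t s)
      = pairing_deriv t"
proof -
  let ?I = "\<lambda>f. integral {-2*R..2*R} f"
  have ct: "0 < c t"
    using width_pos t by simp
  have integrable: "(\<lambda>s. heat_cf_dss (c t) s * \<phi> t s) integrable_on {-2*R..2*R}"
    "(\<lambda>s. heat_cf (c t) s * pd_t \<phi> t s) integrable_on {-2*R..2*R}"
    "(\<lambda>s. heat_cf (c t) s * pd_s (pd_s \<phi>) t s) integrable_on {-2*R..2*R}"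
    using ct by (auto intro!: integrable_continuous_interval continuous_intros continuous_on_slice[OF continuous]
        continuous_on_slice[OF continuous_pd_t] continuous_on_slice[OF continuous_pd_ss])
  have "?I (\<lambda>s. c t * heat_cf_dss (c t) s * c' t * \<phi> t s + heat_cf (c t) s * pd_t \<phi> t s)
      = (c t * c' t) * ?I (\<lambda>s. heat_cf_dss (c t) s * \<phi> t s) + ?I (\<lambda>s. heat_cf (c t) s * pd_t \<phi> t s)"
    using integral_add[OF integrable_on_cmult_left[OF integrable(1), of "c t * c' t"] integrable(2)]
    by (simp add: mult_ac)
  also have "\<dots> = (c t * c' t) * ?I (\<lambda>s. heat_cf (c t) s * pd_s (pd_s \<phi>) t s)
      + ?I (\<lambda>s. heat_cf (c t) s * pd_t \<phi> t s)"
    by (simp only: integration_by_parts_heat_cf[OF ct])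
  also have "\<dots> = ?I (weak_integrand t)"
    using integral_add[OF integrable_on_cmult_left[OF integrable(3), of "c t * c' t"] integrable(2)] ct
    by (simp add: weak_integrand_def[abs_def] heat_unif_eq_heat_cf algebra_simps)
  finally show ?thesis
    by (simp add: pairing_deriv_eq_integral)
qed

lemma pairing_has_deriv_after:
  assumes t: "T < t"
  shows "(pairing has_real_derivative pairing_deriv t) (at t)"
  using heat_cf_pairing_deriv[OF t] unfolding pairing_deriv_after[OF t]
proof (rule has_field_derivative_transform_within_open)
  fix u assume "u \<in> {T<..}"
  then show "integral {-2*R..2*R} (\<lambda>s. heat_cf (c u) s * \<phi> u s) = pairing u"
    using width_pos[of u] by (simp add: pairing_eq_integral heat_unif_eq_heat_cf)
qed (use t in auto)

lemma abs_pairing_minus_initial_le: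
  obtains M where "0 \<le> M" and "\<And>u. \<bar>pairing u - initial_pairing u\<bar> \<le> M * (2 * \<bar>c u\<bar> * sqrt (2/pi))"
proof -
  obtain M where M: "\<And>t s. \<bar>\<phi> t s\<bar> \<le> M" using bounded by blast
  then have M0: "0 \<le> M" by (meson abs_ge_zero order_trans)
  have "\<bar>pairing u - initial_pairing u\<bar> \<le> M * (2 * \<bar>c u\<bar> * sqrt (2/pi))" for u
  proof -
    have initial: "integrable lborel (\<lambda>s. heat_unif 0 s * \<phi> u s)"
      "initial_pairing u = (LINT s|lborel. heat_unif 0 s * \<phi> u s)"
      using integral_unif_density_mult[OF continuous_on_slice[OF continuous]]
      by (auto simp: heat_unif_0 initial_pairing_def)
    have "pairing u - initial_pairing u = (LINT s|lborel. (heat_unif (c u) s - heat_unif 0 s) * \<phi> u s)"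
      unfolding pairing_def initial(2) left_diff_distrib
      by (rule Bochner_Integration.integral_diff[symmetric, OF integrable_pairing_integrand initial(1)])
    also have "\<bar>\<dots>\<bar> \<le> (LINT s|lborel. \<bar>(heat_unif (c u) s - heat_unif 0 s) * \<phi> u s\<bar>)"
      by (rule integral_abs_bound)
    also have "\<dots> \<le> (LINT s|lborel. M * \<bar>heat_unif (c u) s - heat_unif 0 s\<bar>)"
    proof (rule integral_mono)
      show "integrable lborel (\<lambda>s. \<bar>(heat_unif (c u) s - heat_unif 0 s) * \<phi> u s\<bar>)"
        using Bochner_Integration.integrable_diff[OF integrable_pairing_integrand initial(1)]
        by (intro integrable_abs) (simp add: left_diff_distrib)
    qed (auto intro!: integrable_mult_right integrable_abs_heat_unif_diff
           simp: abs_mult mult.commute mult_right_mono M)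
    also have "\<dots> \<le> M * (2 * \<bar>c u - 0\<bar> * sqrt (2/pi))"
      using mult_left_mono[OF integral_abs_heat_unif_diff_le[of "c u" 0] M0] by simp
    finally show ?thesis by simp
  qed
  with M0 show ?thesis
    using that by blast
qed

text \<open>At time \<open>T\<close> the closed form breaks down; continuity comes from the \<open>L\<^sup>1\<close> estimate instead.\<close>

lemma pairing_continuous_at_T: "isCont pairing T"
proof -
  obtain M where "0 \<le> M" and bound: "\<And>u. \<bar>pairing u - initial_pairing u\<bar> \<le> M * (2 * \<bar>c u\<bar> * sqrt (2/pi))"
    using abs_pairing_minus_initial_le by blast
  have "((\<lambda>u. M * (2 * \<bar>c u\<bar> * sqrt (2/pi))) \<longlongrightarrow> M * (2 * \<bar>c T\<bar> * sqrt (2/pi))) (at T)"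
    using continuous_width by (intro tendsto_intros) (simp add: continuous_on_eq_continuous_at isCont_def)
  then have "((\<lambda>u. M * (2 * \<bar>c u\<bar> * sqrt (2/pi))) \<longlongrightarrow> 0) (at T)"
    by (simp add: width_zero)
  then have "((\<lambda>u. pairing u - initial_pairing u) \<longlongrightarrow> 0) (at T)"
    by (rule Lim_null_comparison[rotated]) (simp add: bound)
  moreover have "(initial_pairing \<longlongrightarrow> initial_pairing T) (at T)"
    using DERIV_isCont[OF initial_pairing_deriv] by (simp add: isCont_def)
  ultimately have "((\<lambda>u. (pairing u - initial_pairing u) + initial_pairing u) \<longlongrightarrow> 0 + initial_pairing T) (at T)"
    by (rule tendsto_add)
  then show ?thesis
    by (simp add: isCont_def pairing_before)
qed

lemma pairing_continuous: "isCont pairing t"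
  using pairing_continuous_at_T DERIV_isCont[OF pairing_has_deriv_before] DERIV_isCont[OF pairing_has_deriv_after]
  by (cases t T rule: linorder_cases) auto

lemma pairing_vanishes: "R < \<bar>t\<bar> \<Longrightarrow> pairing t = 0"
  using vanishes_outside[of _ t] by (simp add: pairing_def)

lemma pairing_deriv_vanishes: "R < \<bar>t\<bar> \<Longrightarrow> pairing_deriv t = 0"
  using weak_integrand_vanishes[of _ t] by (simp add: pairing_deriv_def)

lemma pairing_deriv_has_integral_0: "(pairing_deriv has_integral 0) {-2*R..2*R}"
proof -
  have "(pairing_deriv has_integral (pairing (2*R) - pairing (-2*R))) {-2*R..2*R}"
  proof (rule fundamental_theorem_of_calculus_interior_strong[where S="{T}"])
    fix x assume "x \<in> {-2*R<..<2*R} - {T}"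
    then have "x < T \<or> T < x" by auto
    then show "(pairing has_vector_derivative pairing_deriv x) (at x)"
      using pairing_has_deriv_before pairing_has_deriv_after
      by (auto simp: has_real_derivative_iff_has_vector_derivative[symmetric])
  qed (use R_pos in \<open>auto intro!: continuous_at_imp_continuous_on pairing_continuous\<close>)
  then show ?thesis
    using pairing_vanishes[of "2*R"] pairing_vanishes[of "-2*R"] R_pos by simp
qed

lemma integrable_weak_integrand_pair: "integrable (lborel \<Otimes>\<^sub>M lborel) (\<lambda>(t, s). weak_integrand t s)"
proof -
  obtain M where M: "\<And>t s. \<bar>weak_integrand t s\<bar> \<le> M" using weak_integrand_bound by blast
  then have M0: "0 \<le> M" by (meson abs_ge_zero order_trans)
  let ?K = "{-R..R} \<times> {-R..R}"
  have bound: "\<bar>weak_integrand t s\<bar> \<le> M * indicator ?K (t, s)" for t s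
  proof (cases "(t, s) \<in> ?K")
    case False
    then have "R < \<bar>s\<bar> \<or> R < \<bar>t\<bar>"
      by auto
    then show ?thesis
      using weak_integrand_vanishes False by simp
  qed (simp add: M)
  have "emeasure (lborel \<Otimes>\<^sub>M lborel) ?K < \<infinity>"
    using R_pos by (subst lborel.emeasure_pair_measure_Times) (auto simp: ennreal_mult_less_top)
  then have "integrable (lborel \<Otimes>\<^sub>M lborel) (\<lambda>z. M * indicator ?K z)"
    by (intro integrable_mult_right) (auto simp: integrable_indicator_iff)
  moreover have "(\<lambda>(t, s). weak_integrand t s) \<in> borel_measurable (lborel \<Otimes>\<^sub>M lborel)"
    unfolding weak_integrand_def by measurable
  moreover have "AE z in lborel \<Otimes>\<^sub>M lborel. norm ((\<lambda>(t, s). weak_integrand t s) z) \<le> norm (M * indicator ?K z)"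
    using bound M0 by (intro AE_I2) (auto simp: abs_mult)
  ultimately show ?thesis
    by (rule Bochner_Integration.integrable_bound)
qed

lemma integral_weak_integrand_pair: "integral\<^sup>L (lborel \<Otimes>\<^sub>M lborel) (\<lambda>(t, s). weak_integrand t s) = 0"
proof -
  have "pairing_deriv t = 0" if "t \<notin> {-2*R..2*R}" for t
    using that R_pos by (intro pairing_deriv_vanishes) auto
  then have restrict: "(\<lambda>t. indicator {-2*R..2*R} t *\<^sub>R pairing_deriv t) = pairing_deriv"
    by (auto simp: indicator_def fun_eq_iff)
  have "integrable lborel pairing_deriv"
    using lborel_pair.integrable_fst'[OF integrable_weak_integrand_pair]
    by (simp add: pairing_deriv_def[abs_def])
  then have "set_integrable lborel {-2*R..2*R} pairing_deriv"
    unfolding set_integrable_def restrict .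
  have "integral\<^sup>L (lborel \<Otimes>\<^sub>M lborel) (\<lambda>(t, s). weak_integrand t s) = (LINT t|lborel. pairing_deriv t)"
    using lborel_pair.integral_fst'[OF integrable_weak_integrand_pair]
    by (simp add: pairing_deriv_def[abs_def])
  also have "\<dots> = (LINT t:{-2*R..2*R}|lborel. pairing_deriv t)"
    unfolding set_lebesgue_integral_def restrict ..
  also have "\<dots> = integral {-2*R..2*R} pairing_deriv"
    by (rule set_borel_integral_eq_integral(2)) fact
  also have "\<dots> = 0"
    using pairing_deriv_has_integral_0 by (rule integral_unique)
  finally show ?thesis .
qed

end

section \<open>Infinitely many solutions\<close>

locale escaping_time_change =
  fixes \<alpha> :: real and \<tau> :: "real \<Rightarrow> real"
  assumes alpha_pos: "0 < \<alpha>"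
    and continuous: "continuous_on UNIV \<tau>"
    and zero: "\<And>t. t \<le> 0 \<Longrightarrow> \<tau> t = 0"
    and pos: "\<And>t. 0 < t \<Longrightarrow> 0 < \<tau> t"
    and deriv: "\<And>t. 0 < t \<Longrightarrow> (\<tau> has_real_derivative F_unif \<alpha> (\<tau> t)) (at t)"
begin

definition width :: "real \<Rightarrow> real \<Rightarrow> real" where
  "width T t = sqrt (2 * \<tau> (t - T))"

definition width' :: "real \<Rightarrow> real \<Rightarrow> real" where
  "width' T t = (if T < t then F_unif \<alpha> (\<tau> (t - T)) / width T t else 0)"

definition delayed :: "real \<Rightarrow> real \<Rightarrow> real \<Rightarrow> real" where
  "delayed T t = heat_unif (width T t)"

lemma continuous_width: "continuous_on UNIV (width T)"
  unfolding width_def[abs_def]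
  by (intro continuous_intros continuous_on_compose2[OF continuous]) auto

lemma width_zero: "t \<le> T \<Longrightarrow> width T t = 0"
  by (simp add: width_def zero)

lemma width_pos: "T < t \<Longrightarrow> 0 < width T t"
  using pos[of "t - T"] by (simp add: width_def)

lemma width_deriv:
  assumes t: "T < t"
  shows "(width T has_real_derivative width' T t) (at t)"
proof -
  have "((\<lambda>t. t - T) has_real_derivative 1) (at t)"
    by (auto intro!: derivative_eq_intros)
  from DERIV_chain2[OF deriv this] t
  have "((\<lambda>t. \<tau> (t - T)) has_real_derivative F_unif \<alpha> (\<tau> (t - T))) (at t)"
    by simp
  from DERIV_chain2[OF DERIV_real_sqrt DERIV_cmult[OF this, of 2]]
  have "(width T has_real_derivative inverse (width T t) / 2 * (2 * F_unif \<alpha> (\<tau> (t - T)))) (at t)"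
    using pos[of "t - T"] t by (simp add: width_def[abs_def])
  then show ?thesis
    using t by (simp add: width'_def field_simps)
qed

lemma continuous_width': "continuous_on {T<..} (width' T)"
proof -
  have "continuous_on {T<..} (\<lambda>t. F_unif \<alpha> (\<tau> (t - T)) / width T t)"
    using width_pos
    by (intro continuous_intros continuous_on_compose2[OF continuous_on_F_unif]
          continuous_on_compose2[OF continuous] continuous_on_subset[OF continuous_width])
       (auto simp: less_imp_neq[symmetric])
  then show ?thesis
    by (rule continuous_on_eq) (auto simp: width'_def)
qed

lemma width'_measurable: "width' T \<in> borel_measurable borel"
proof -
  have [measurable]: "\<tau> \<in> borel_measurable borel" "F_unif \<alpha> \<in> borel_measurable borel"
    using continuous continuous_on_F_unif by (auto intro: borel_measurable_continuous_onI)
  have [measurable]: "width T \<in> borel_measurable borel"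
    using continuous_width by (rule borel_measurable_continuous_onI)
  show ?thesis
    unfolding width'_def[abs_def] by measurable
qed

lemma width_mult_width': "width T t * width' T t = Dfun \<alpha> (delayed T t)"
proof (cases "T < t")
  case True
  then show ?thesis
    using width_pos[OF True] pos[of "t - T"]
    by (simp add: width'_def delayed_def F_unif_def width_def)
next
  case False
  then show ?thesis
    by (simp add: width'_def delayed_def width_zero heat_unif_0 Dfun_unif_density)
qed

lemma diffusivity_bound: "\<bar>width T t * width' T t\<bar> \<le> \<alpha>"
  unfolding width_mult_width' delayed_def
  using Dfun_heat_unif_nonneg[of \<alpha>] Dfun_heat_unif_le[of \<alpha>] alpha_pos by simp

lemma C0_L2_delayed: "C0_L2 (delayed T)"
  unfolding C0_L2_def
proof (intro conjI allI impI)
  fix t :: real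
  show "delayed T t \<in> borel_measurable lborel"
    by (simp add: delayed_def)
  show "integrable lborel (\<lambda>s. (delayed T t s)\<^sup>2)"
    by (simp add: delayed_def integrable_heat_unif_squared)
next
  fix t0 :: real
  have "((\<lambda>t. 2 * \<bar>width T t - width T t0\<bar> * sqrt (2/pi)) \<longlongrightarrow> 2 * \<bar>width T t0 - width T t0\<bar> * sqrt (2/pi)) (at t0)"
    using continuous_width by (intro tendsto_intros) (simp add: continuous_on_eq_continuous_at isCont_def)
  then have "((\<lambda>t. 2 * \<bar>width T t - width T t0\<bar> * sqrt (2/pi)) \<longlongrightarrow> 0) (at t0)"
    by simp
  then have "((\<lambda>t. LINT s|lborel. (delayed T t s - delayed T t0 s)\<^sup>2) \<longlongrightarrow> 0) (at t0)"
  proof (rule Lim_null_comparison[rotated])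
    show "\<forall>\<^sub>F t in at t0. norm (LINT s|lborel. (delayed T t s - delayed T t0 s)\<^sup>2)
        \<le> 2 * \<bar>width T t - width T t0\<bar> * sqrt (2/pi)"
      using integral_heat_unif_diff_squared_le
      by (intro always_eventually allI) (simp add: delayed_def)
  qed
  then show "((\<lambda>t. LINT s|lborel. (delayed T t s - delayed T t0 s)\<^sup>2) \<longlongrightarrow> 0) (at t0 within {0..})"
    by (rule tendsto_mono[OF at_le, rotated]) simp
qed

lemma is_solution_delayed:
  assumes T: "0 \<le> T"
  shows "is_solution \<alpha> unif_density (delayed T)"
  unfolding is_solution_def Let_def
proof (intro conjI allI impI)
  fix \<phi> assume "test_fun \<phi>"
  then obtain a b R where smooth: "smooth2 \<phi>"
    and support: "\<And>t s. \<phi> t s \<noteq> 0 \<Longrightarrow> a \<le> t \<and> t \<le> b \<and> \<bar>s\<bar> \<le> R"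
    unfolding test_fun_def by blast
  define R' where "R' = max (max \<bar>a\<bar> \<bar>b\<bar>) \<bar>R\<bar> + 1"
  interpret heat_path \<phi> R' "width T" "width' T" T \<alpha>
  proof
    show "\<phi> t s \<noteq> 0 \<Longrightarrow> \<bar>t\<bar> \<le> R' \<and> \<bar>s\<bar> \<le> R'" for t s
      using support[of t s] by (auto simp: R'_def)
  qed (auto simp: R'_def smooth continuous_width width_zero width_pos width_deriv continuous_width'
         width'_measurable diffusivity_bound)
  have integrand: "(\<lambda>(t, s). delayed T t s * (pd_t \<phi> t s + Dfun \<alpha> (delayed T t) * pd_s (pd_s \<phi>) t s))
      = (\<lambda>(t, s). weak_integrand t s)"
    by (simp add: weak_integrand_def width_mult_width' delayed_def)
  show "integrable (lborel \<Otimes>\<^sub>M lborel)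
      (\<lambda>(t, s). delayed T t s * (pd_t \<phi> t s + Dfun \<alpha> (delayed T t) * pd_s (pd_s \<phi>) t s))"
    unfolding integrand by (rule integrable_weak_integrand_pair)
  show "integral\<^sup>L (lborel \<Otimes>\<^sub>M lborel)
      (\<lambda>(t, s). delayed T t s * (pd_t \<phi> t s + Dfun \<alpha> (delayed T t) * pd_s (pd_s \<phi>) t s)) = 0"
    unfolding integrand by (rule integral_weak_integrand_pair)
qed (use T in \<open>auto simp: C0_L2_delayed delayed_def integrable_heat_unif width_zero heat_unif_0\<close>)

lemma delayed_differ:
  assumes "0 \<le> T1" and "T1 < T2"
  shows "(LINT s|lborel. (delayed T1 T2 s - delayed T2 T2 s)\<^sup>2) \<noteq> 0"
proof
  define c where "c = width T1 T2"
  have c: "0 < c"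
    unfolding c_def using assms by (intro width_pos)
  assume "(LINT s|lborel. (delayed T1 T2 s - delayed T2 T2 s)\<^sup>2) = 0"
  then have "(LINT s|lborel. (heat_unif c s - heat_unif 0 s)\<^sup>2) = 0"
    by (simp add: delayed_def c_def width_zero)
  then have "AE s in lborel. (heat_unif c s - heat_unif 0 s)\<^sup>2 = 0"
    using integral_nonneg_eq_0_iff_AE[OF integrable_heat_unif_diff_squared] by simp
  then have "AE s in lborel. indicator {\<sigma>::real. 1 < \<bar>\<sigma>\<bar>} s * heat_unif c s
      = indicator {\<sigma>::real. 1 < \<bar>\<sigma>\<bar>} s * heat_unif 0 s"
    by eventually_elim simp
  then have "(LINT s|lborel. indicator {\<sigma>::real. 1 < \<bar>\<sigma>\<bar>} s * heat_unif c s)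
      = (LINT s|lborel. indicator {\<sigma>::real. 1 < \<bar>\<sigma>\<bar>} s * heat_unif 0 s)"
    by (rule integral_cong_AE[rotated 2]) auto
  then have "Dfun \<alpha> (heat_unif c) = Dfun \<alpha> (heat_unif 0)"
    unfolding Dfun_eq_integral_indicator by simp
  then show False
    using Dfun_heat_unif_pos[OF alpha_pos c] by (simp add: heat_unif_0 Dfun_unif_density)
qed

lemma infinitely_many_solutions:
  "\<exists>U :: nat \<Rightarrow> real \<Rightarrow> real \<Rightarrow> real. (\<forall>n. is_solution \<alpha> unif_density (U n)) \<and>
     (\<forall>n m. n \<noteq> m \<longrightarrow> (\<exists>t\<ge>0. (LINT s|lborel. (U n t s - U m t s)\<^sup>2) \<noteq> 0))"
proof (intro exI[of _ "\<lambda>n. delayed (real n)"] conjI allI impI)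
  show "is_solution \<alpha> unif_density (delayed (real n))" for n
    by (rule is_solution_delayed) simp
  fix n m :: nat assume "n \<noteq> m"
  then consider "n < m" | "m < n" by linarith
  then show "\<exists>t\<ge>0. (LINT s|lborel. (delayed (real n) t s - delayed (real m) t s)\<^sup>2) \<noteq> 0"
  proof cases
    case 1
    then show ?thesis
      using delayed_differ[of "real n" "real m"] by (intro exI[of _ "real m"]) auto
  next
    case 2
    then show ?thesis
      using delayed_differ[of "real m" "real n"]
      by (intro exI[of _ "real n"]) (auto simp: power2_commute)
  qed
qed

end

lemma nn_integral_inverse_Ffun_unif_density:
  "(\<integral>\<^sup>+x\<in>{0..1}. ennreal (1 / Ffun \<alpha> unif_density x) \<partial>lborel)
    = (\<integral>\<^sup>+x\<in>{0..1}. ennreal (1 / F_unif \<alpha> x) \<partial>lborel)"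
  by (intro nn_integral_cong) (auto simp: indicator_def Ffun_unif_density_eq_F_unif)

theorem corollary4p1:
  fixes \<alpha> :: real and p0 :: "real \<Rightarrow> real"
  assumes "\<alpha> > 0"
    and "p0 = (\<lambda>\<sigma>. indicator {-1<..<1} \<sigma> / 2)"
  shows "integrable lborel p0
    \<and> (\<exists>C. AE \<sigma> in lborel. \<bar>p0 \<sigma>\<bar> \<le> C)
    \<and> (\<forall>\<sigma>. p0 \<sigma> \<ge> 0)
    \<and> (LINT \<sigma>|lborel. p0 \<sigma>) = 1
    \<and> integrable lborel (\<lambda>\<sigma>. \<bar>\<sigma>\<bar> * p0 \<sigma>)
    \<and> Dfun \<alpha> p0 = 0
    \<and> (\<integral>\<^sup>+ x\<in>{0..1}. ennreal (1 / Ffun \<alpha> p0 x) \<partial>lborel) < \<infinity>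
    \<and> (\<exists>U :: nat \<Rightarrow> real \<Rightarrow> real \<Rightarrow> real.
         (\<forall>n. is_solution \<alpha> p0 (U n)) \<and>
         (\<forall>n m. n \<noteq> m \<longrightarrow> (\<exists>t\<ge>0. (LINT s|lborel. (U n t s - U m t s)\<^sup>2) \<noteq> 0)))"
proof -
  have p0: "p0 = unif_density"
    using assms(2) by (simp add: unif_density_def[abs_def])
  have inverse_F_finite: "(\<integral>\<^sup>+x\<in>{0..1}. ennreal (1 / F_unif \<alpha> x) \<partial>lborel) < \<infinity>"
    using assms(1) F_unif_ge_sqrt
    by (intro nn_integral_inverse_finite_if_ge_sqrt[where k="\<alpha> * sqrt 2 * std_normal_density 1 / 32"])
       (auto simp: normal_density_pos)
  interpret osgood_ode "F_unif \<alpha>" \<alpha>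
    using assms(1) continuous_on_F_unif F_unif_pos F_unif_le inverse_F_finite by unfold_locales auto
  interpret escaping_time_change \<alpha> position
    using assms(1) continuous_position position_zero position_pos position_deriv by unfold_locales auto
  show ?thesis
    unfolding p0
    using integrable_unif_density unif_density_nonneg unif_density_le integral_unif_density
      integrable_abs_moment_unif_density Dfun_unif_density inverse_F_finite infinitely_many_solutions
    by (auto intro!: exI[of _ "1/2"] AE_I2 simp: nn_integral_inverse_Ffun_unif_density)
qed

end
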